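(* Let $\mathcal{Q}$ be a small involutive quantaloid and $\mathbb{A}$ a $\mathcal{Q}$-category. The following are equivalent: (1) the functor $L_{\mathbb{A}}\colon(\mathbb{A}_{\mathsf s})_{\mathsf{sc}}\to(\mathbb{A}_{\mathsf{cc}})_{\mathsf s}$, $\phi\mapsto\mathbb{A}(-,S_{\mathbb{A}}-)\otimes\phi$, is surjective on objects; (2) for every $X\in\mathcal{Q}_0$ and every left adjoint presheaf $\psi\colon *_X\to\mathbb{A}$, the presheaf $\psi_{\mathsf s}\colon *_X\to\mathbb{A}_{\mathsf s}$ is a symmetric left adjoint; (3) for every $\mathcal{Q}$-category $\mathbb{X}$ and every left adjoint distributor $\Psi\colon\mathbb{X}\to\mathbb{A}$, the distributor $\Psi_{\mathsf s}\colon\mathbb{X}_{\mathsf s}\to\mathbb{A}_{\mathsf s}$ is a symmetric left adjoint. Moreover, when (1) holds, $L_{\mathbb{A}}$ is an isomorphism with inverse $\psi\mapsto\psi_{\mathsf s}$.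
   Context: A quantaloid is a category enriched in $\mathsf{Sup}$; an involution is an identity-on-objects, direction-reversing, monotone map $f\mapsto f^{\mathsf o}$ on morphisms with $(g\circ f)^{\mathsf o}=f^{\mathsf o}\circ g^{\mathsf o}$, $f^{\mathsf{oo}}=f$. A $\mathcal{Q}$-category $\mathbb{A}$: objects with types $tx\in\mathcal{Q}_0$, homs $\mathbb{A}(y,x)\colon tx\to ty$ with $\mathbb{A}(z,y)\circ\mathbb{A}(y,x)\le\mathbb{A}(z,x)$, $1_{tx}\le\mathbb{A}(x,x)$; symmetric if $\mathbb{A}(x,y)=\mathbb{A}(y,x)^{\mathsf o}$. Symmetrisation $\mathbb{A}_{\mathsf s}$: same objects, $\mathbb{A}_{\mathsf s}(y,x)=\mathbb{A}(y,x)\wedge\mathbb{A}(x,y)^{\mathsf o}$; $S_{\mathbb{A}}\colon\mathbb{A}_{\mathsf s}\to\mathbb{A}$ is the identity on objects. Distributors $\Phi\colon\mathbb{A}\to\mathbb{B}$: arrows $\Phi(y,x)\colon tx\to ty$ with $\mathbb{B}(y',y)\circ\Phi(y,x)\le\Phi(y',x)$, $\Phi(y,x)\circ\mathbb{A}(x,x')\le\Phi(y,x')$; composition $(\Psi\otimes\Phi)(z,x)=\bigvee_y\Psi(z,y)\circ\Phi(y,x)$; left adjoint with right adjoint $\Phi^*$ if $\mathbb{A}\le\Phi^*\otimes\Phi$, $\Phi\otimes\Phi^*\le\mathbb{B}$. $\mathbb{A}(-,S_{\mathbb{A}}-)\colon\mathbb{A}_{\mathsf s}\to\mathbb{A}$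 has elements $\mathbb{A}(y,x)$. For distributors between symmetric categories, $\Phi^{\mathsf o}(x,y)=\Phi(y,x)^{\mathsf o}$, and $\Phi$ is a symmetric left adjoint if left adjoint to $\Phi^{\mathsf o}$. For a left adjoint $\Psi\colon\mathbb{X}\to\mathbb{A}$, $\Psi_{\mathsf s}\colon\mathbb{X}_{\mathsf s}\to\mathbb{A}_{\mathsf s}$ is the distributor $\Psi_{\mathsf s}(a,x)=\Psi(a,x)\wedge\Psi^*(x,a)^{\mathsf o}$ (equivalently $(\mathbb{A}(S_{\mathbb{A}}-,-)\otimes\Psi\otimes\mathbb{X}(-,S_{\mathbb{X}}-))\wedge(\mathbb{X}(S_{\mathbb{X}}-,-)\otimes\Psi^*\otimes\mathbb{A}(-,S_{\mathbb{A}}-))^{\mathsf o}$). $*_X$: one object of type $X$, hom $1_X$ (symmetric, with $( *_X)_{\mathsf s}=*_X$); a presheaf is a distributor $*_X\to\mathbb{A}$. Cauchy completion $\mathbb{A}_{\mathsf{cc}}$: objects the left adjoint presheaves $\phi\colon*_X\to\mathbb{A}$ (type $X$), hom $\mathbb{A}_{\mathsf{cc}}(\psi,\phi)$ the unique element of $\psi^*\otimes\phi$. For symmetric $\mathbb{B}$, $\mathbb{B}_{\mathsf{sc}}$ is the full subcategory of $\mathbb{B}_{\mathsf{cc}}$ on symmetric left adjoint presheaves. *)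

theory Defs
  imports Main
begin

text \<open>A small quantaloid: a set of objects, hom-sets, composition (qcomp g f = g o f),
  identities, a partial order on each hom-set with arbitrary joins (qsup X Y S is the
  join in the hom-set from X to Y of S), composition preserving joins in each variable,
  and an involution qinv.\<close>

record ('o, 'm) quantaloid =
  qobj  :: "'o set"
  qhom  :: "'o \<Rightarrow> 'o \<Rightarrow> 'm set"
  qcomp :: "'m \<Rightarrow> 'm \<Rightarrow> 'm"
  qid   :: "'o \<Rightarrow> 'm"
  qle   :: "'m \<Rightarrow> 'm \<Rightarrow> bool"
  qsup  :: "'o \<Rightarrow> 'o \<Rightarrow> 'm set \<Rightarrow> 'm"
  qinv  :: "'m \<Rightarrow> 'm"

definition quantaloid :: "('o, 'm) quantaloid \<Rightarrow> bool" where
  "quantaloid Q \<longleftrightarrow>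
     (\<forall>X\<in>qobj Q. qid Q X \<in> qhom Q X X) \<and>
     (\<forall>X\<in>qobj Q. \<forall>Y\<in>qobj Q. \<forall>Z\<in>qobj Q. \<forall>f\<in>qhom Q X Y. \<forall>g\<in>qhom Q Y Z.
        qcomp Q g f \<in> qhom Q X Z) \<and>
     (\<forall>X\<in>qobj Q. \<forall>Y\<in>qobj Q. \<forall>Z\<in>qobj Q. \<forall>W\<in>qobj Q.
        \<forall>f\<in>qhom Q X Y. \<forall>g\<in>qhom Q Y Z. \<forall>h\<in>qhom Q Z W.
        qcomp Q h (qcomp Q g f) = qcomp Q (qcomp Q h g) f) \<and>
     (\<forall>X\<in>qobj Q. \<forall>Y\<in>qobj Q. \<forall>f\<in>qhom Q X Y.
        qcomp Q (qid Q Y) f = f \<and> qcomp Q f (qid Q X) = f) \<and>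
     (\<forall>X\<in>qobj Q. \<forall>Y\<in>qobj Q.
        (\<forall>f\<in>qhom Q X Y. qle Q f f) \<and>
        (\<forall>f\<in>qhom Q X Y. \<forall>g\<in>qhom Q X Y. \<forall>h\<in>qhom Q X Y.
            qle Q f g \<longrightarrow> qle Q g h \<longrightarrow> qle Q f h) \<and>
        (\<forall>f\<in>qhom Q X Y. \<forall>g\<in>qhom Q X Y. qle Q f g \<longrightarrow> qle Q g f \<longrightarrow> f = g) \<and>
        (\<forall>S. S \<subseteq> qhom Q X Y \<longrightarrow>
            qsup Q X Y S \<in> qhom Q X Y \<and>
            (\<forall>s\<in>S. qle Q s (qsup Q X Y S)) \<and>
            (\<forall>u\<in>qhom Q X Y. (\<forall>s\<in>S. qle Q s u) \<longrightarrow> qle Q (qsup Q X Y S) u))) \<and>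
     (\<forall>X\<in>qobj Q. \<forall>Y\<in>qobj Q. \<forall>Z\<in>qobj Q. \<forall>f\<in>qhom Q X Y. \<forall>S.
        S \<subseteq> qhom Q Y Z \<longrightarrow>
        qcomp Q (qsup Q Y Z S) f = qsup Q X Z ((\<lambda>g. qcomp Q g f) ` S)) \<and>
     (\<forall>X\<in>qobj Q. \<forall>Y\<in>qobj Q. \<forall>Z\<in>qobj Q. \<forall>g\<in>qhom Q Y Z. \<forall>S.
        S \<subseteq> qhom Q X Y \<longrightarrow>
        qcomp Q g (qsup Q X Y S) = qsup Q X Z (qcomp Q g ` S))"

definition involutive_quantaloid :: "('o, 'm) quantaloid \<Rightarrow> bool" where
  "involutive_quantaloid Q \<longleftrightarrow> quantaloid Q \<and>
     (\<forall>X\<in>qobj Q. \<forall>Y\<in>qobj Q. \<forall>f\<in>qhom Q X Y.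
        qinv Q f \<in> qhom Q Y X \<and> qinv Q (qinv Q f) = f) \<and>
     (\<forall>X\<in>qobj Q. \<forall>Y\<in>qobj Q. \<forall>f\<in>qhom Q X Y. \<forall>g\<in>qhom Q X Y.
        qle Q f g \<longrightarrow> qle Q (qinv Q f) (qinv Q g)) \<and>
     (\<forall>X\<in>qobj Q. \<forall>Y\<in>qobj Q. \<forall>Z\<in>qobj Q. \<forall>f\<in>qhom Q X Y. \<forall>g\<in>qhom Q Y Z.
        qinv Q (qcomp Q g f) = qcomp Q (qinv Q f) (qinv Q g))"

definition qmeet :: "('o, 'm) quantaloid \<Rightarrow> 'o \<Rightarrow> 'o \<Rightarrow> 'm \<Rightarrow> 'm \<Rightarrow> 'm" where
  "qmeet Q X Y f g = qsup Q X Y {h \<in> qhom Q X Y. qle Q h f \<and> qle Q h g}"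

text \<open>chom A y x is the hom A(y,x) : t x --> t y.\<close>
record ('a, 'o, 'm) qcat =
  cob  :: "'a set"
  cty  :: "'a \<Rightarrow> 'o"
  chom :: "'a \<Rightarrow> 'a \<Rightarrow> 'm"

definition qcategory :: "('o, 'm) quantaloid \<Rightarrow> ('a, 'o, 'm) qcat \<Rightarrow> bool" where
  "qcategory Q A \<longleftrightarrow>
     (\<forall>x\<in>cob A. cty A x \<in> qobj Q) \<and>
     (\<forall>x\<in>cob A. \<forall>y\<in>cob A. chom A y x \<in> qhom Q (cty A x) (cty A y)) \<and>
     (\<forall>x\<in>cob A. \<forall>y\<in>cob A. \<forall>z\<in>cob A.
        qle Q (qcomp Q (chom A z y) (chom A y x)) (chom A z x)) \<and>
     (\<forall>x\<in>cob A. qle Q (qid Q (cty A x)) (chom A x x))"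

definition symz :: "('o, 'm) quantaloid \<Rightarrow> ('a, 'o, 'm) qcat \<Rightarrow> ('a, 'o, 'm) qcat" where
  "symz Q A = \<lparr> cob = cob A, cty = cty A,
     chom = (\<lambda>y x. if x \<in> cob A \<and> y \<in> cob A
                   then qmeet Q (cty A x) (cty A y) (chom A y x) (qinv Q (chom A x y))
                   else undefined) \<rparr>"

definition star :: "('o, 'm) quantaloid \<Rightarrow> 'o \<Rightarrow> (unit, 'o, 'm) qcat" where
  "star Q X = \<lparr> cob = {()}, cty = (\<lambda>_. X), chom = (\<lambda>_ _. qid Q X) \<rparr>"

text \<open>A distributor Phi : A --> B is a function with Phi y x : t x --> t y
  (y an object of B, x an object of A); values outside objects are fixed to undefined.\<close>
definition distributor :: "('o, 'm) quantaloid \<Rightarrow> ('a, 'o, 'm) qcat \<Rightarrow> ('b, 'o, 'm) qcat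
    \<Rightarrow> ('b \<Rightarrow> 'a \<Rightarrow> 'm) \<Rightarrow> bool" where
  "distributor Q A B \<Phi> \<longleftrightarrow>
     (\<forall>x\<in>cob A. \<forall>y\<in>cob B. \<Phi> y x \<in> qhom Q (cty A x) (cty B y)) \<and>
     (\<forall>x\<in>cob A. \<forall>y\<in>cob B. \<forall>y'\<in>cob B.
        qle Q (qcomp Q (chom B y' y) (\<Phi> y x)) (\<Phi> y' x)) \<and>
     (\<forall>x\<in>cob A. \<forall>x'\<in>cob A. \<forall>y\<in>cob B.
        qle Q (qcomp Q (\<Phi> y x) (chom A x x')) (\<Phi> y x')) \<and>
     (\<forall>y x. \<not> (y \<in> cob B \<and> x \<in> cob A) \<longrightarrow> \<Phi> y x = undefined)"

definition dcomp :: "('o, 'm) quantaloid \<Rightarrow> ('a, 'o, 'm) qcat \<Rightarrow> ('b, 'o, 'm) qcat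
    \<Rightarrow> ('c, 'o, 'm) qcat \<Rightarrow> ('c \<Rightarrow> 'b \<Rightarrow> 'm) \<Rightarrow> ('b \<Rightarrow> 'a \<Rightarrow> 'm) \<Rightarrow> ('c \<Rightarrow> 'a \<Rightarrow> 'm)" where
  "dcomp Q A B C \<Psi> \<Phi> = (\<lambda>z x. if z \<in> cob C \<and> x \<in> cob A
     then qsup Q (cty A x) (cty C z) ((\<lambda>y. qcomp Q (\<Psi> z y) (\<Phi> y x)) ` cob B)
     else undefined)"

definition dle :: "('o, 'm) quantaloid \<Rightarrow> ('a, 'o, 'm) qcat \<Rightarrow> ('b, 'o, 'm) qcat
    \<Rightarrow> ('b \<Rightarrow> 'a \<Rightarrow> 'm) \<Rightarrow> ('b \<Rightarrow> 'a \<Rightarrow> 'm) \<Rightarrow> bool" where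
  "dle Q A B \<Phi> \<Psi> \<longleftrightarrow> (\<forall>x\<in>cob A. \<forall>y\<in>cob B. qle Q (\<Phi> y x) (\<Psi> y x))"

definition is_adj :: "('o, 'm) quantaloid \<Rightarrow> ('a, 'o, 'm) qcat \<Rightarrow> ('b, 'o, 'm) qcat
    \<Rightarrow> ('b \<Rightarrow> 'a \<Rightarrow> 'm) \<Rightarrow> ('a \<Rightarrow> 'b \<Rightarrow> 'm) \<Rightarrow> bool" where
  "is_adj Q A B \<Phi> \<Psi> \<longleftrightarrow> distributor Q A B \<Phi> \<and> distributor Q B A \<Psi> \<and>
     dle Q A A (chom A) (dcomp Q A B A \<Psi> \<Phi>) \<and>
     dle Q B B (dcomp Q B A B \<Phi> \<Psi>) (chom B)"

definition ladj :: "('o, 'm) quantaloid \<Rightarrow> ('a, 'o, 'm) qcat \<Rightarrow> ('b, 'o, 'm) qcat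
    \<Rightarrow> ('b \<Rightarrow> 'a \<Rightarrow> 'm) \<Rightarrow> bool" where
  "ladj Q A B \<Phi> \<longleftrightarrow> (\<exists>\<Psi>. is_adj Q A B \<Phi> \<Psi>)"

definition radj :: "('o, 'm) quantaloid \<Rightarrow> ('a, 'o, 'm) qcat \<Rightarrow> ('b, 'o, 'm) qcat
    \<Rightarrow> ('b \<Rightarrow> 'a \<Rightarrow> 'm) \<Rightarrow> ('a \<Rightarrow> 'b \<Rightarrow> 'm)" where
  "radj Q A B \<Phi> = (THE \<Psi>. is_adj Q A B \<Phi> \<Psi>)"

definition dual :: "('o, 'm) quantaloid \<Rightarrow> ('a, 'o, 'm) qcat \<Rightarrow> ('b, 'o, 'm) qcat
    \<Rightarrow> ('b \<Rightarrow> 'a \<Rightarrow> 'm) \<Rightarrow> ('a \<Rightarrow> 'b \<Rightarrow> 'm)" where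
  "dual Q A B \<Phi> = (\<lambda>x y. if x \<in> cob A \<and> y \<in> cob B then qinv Q (\<Phi> y x) else undefined)"

definition sym_ladj :: "('o, 'm) quantaloid \<Rightarrow> ('a, 'o, 'm) qcat \<Rightarrow> ('b, 'o, 'm) qcat
    \<Rightarrow> ('b \<Rightarrow> 'a \<Rightarrow> 'm) \<Rightarrow> bool" where
  "sym_ladj Q A B \<Phi> \<longleftrightarrow> is_adj Q A B \<Phi> (dual Q A B \<Phi>)"

definition dsym :: "('o, 'm) quantaloid \<Rightarrow> ('x, 'o, 'm) qcat \<Rightarrow> ('a, 'o, 'm) qcat
    \<Rightarrow> ('a \<Rightarrow> 'x \<Rightarrow> 'm) \<Rightarrow> ('a \<Rightarrow> 'x \<Rightarrow> 'm)" where
  "dsym Q X A \<Psi> = (\<lambda>a x. if a \<in> cob A \<and> x \<in> cob X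
     then qmeet Q (cty X x) (cty A a) (\<Psi> a x) (qinv Q (radj Q X A \<Psi> x a))
     else undefined)"

text \<open>Objects of A_cc: pairs (X, phi) with phi : *_X --> A a left adjoint presheaf (type X).
  Hom A_cc(psi, phi) is the unique element of psi^* (x) phi.\<close>
definition cc :: "('o, 'm) quantaloid \<Rightarrow> ('a, 'o, 'm) qcat
    \<Rightarrow> ('o \<times> ('a \<Rightarrow> unit \<Rightarrow> 'm), 'o, 'm) qcat" where
  "cc Q A = \<lparr> cob = {(X, \<phi>). X \<in> qobj Q \<and> ladj Q (star Q X) A \<phi>},
     cty = fst,
     chom = (\<lambda>p q. dcomp Q (star Q (fst q)) A (star Q (fst p))
                       (radj Q (star Q (fst p)) A (snd p)) (snd q) () ()) \<rparr>"

definition sc :: "('o, 'm) quantaloid \<Rightarrow> ('a, 'o, 'm) qcat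
    \<Rightarrow> ('o \<times> ('a \<Rightarrow> unit \<Rightarrow> 'm), 'o, 'm) qcat" where
  "sc Q B = \<lparr> cob = {p \<in> cob (cc Q B). sym_ladj Q (star Q (fst p)) B (snd p)},
     cty = cty (cc Q B), chom = chom (cc Q B) \<rparr>"

text \<open>The functor L_A : (A_s)_sc --> (A_cc)_s on objects, phi |-> A(-,S_A -) (x) phi,
  and the candidate inverse psi |-> psi_s.\<close>
definition Lfun :: "('o, 'm) quantaloid \<Rightarrow> ('a, 'o, 'm) qcat
    \<Rightarrow> 'o \<times> ('a \<Rightarrow> unit \<Rightarrow> 'm) \<Rightarrow> 'o \<times> ('a \<Rightarrow> unit \<Rightarrow> 'm)" where
  "Lfun Q A p = (fst p, dcomp Q (star Q (fst p)) (symz Q A) A (chom A) (snd p))"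

definition Linv :: "('o, 'm) quantaloid \<Rightarrow> ('a, 'o, 'm) qcat
    \<Rightarrow> 'o \<times> ('a \<Rightarrow> unit \<Rightarrow> 'm) \<Rightarrow> 'o \<times> ('a \<Rightarrow> unit \<Rightarrow> 'm)" where
  "Linv Q A p = (fst p, dsym Q (star Q (fst p)) A (snd p))"

end

theory Submission
  imports Defs
begin

text \<open>
  For a left adjoint \<open>\<Psi>\<close> the counit inequality of \<open>\<Psi>\<^sub>s \<stileturn> \<Psi>\<^sub>s\<^sup>o\<close> always holds, so \<open>\<Psi>\<^sub>s\<close> is a
  symmetric left adjoint iff the unit inequality holds, and by the action of \<open>\<bbbX>\<^sub>s\<close> on \<open>\<Psi>\<^sub>s\<close> it is
  enough to check it on the diagonal. On the diagonal it only involves the column \<open>\<Psi>(-, x)\<close>,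
  itself a left adjoint presheaf; this gives (2) \<open>\<Leftrightarrow>\<close> (3).

  For a symmetric left adjoint \<open>\<phi>: *\<^sub>X \<rightarrow> \<bbbA>\<^sub>s\<close>, the presheaf \<open>L\<^sub>\<bbbA> \<phi> = \<bbbA>(-, S\<^sub>\<bbbA>-) \<otimes> \<phi>\<close> is left adjoint
  to \<open>\<phi>\<^sup>o \<otimes> \<bbbA>(S\<^sub>\<bbbA>-, -)\<close> and \<open>(L\<^sub>\<bbbA> \<phi>)\<^sub>s = \<phi>\<close>; conversely \<open>L\<^sub>\<bbbA> (\<psi>\<^sub>s) = \<psi>\<close> whenever \<open>\<psi>\<^sub>s\<close> is a
  symmetric left adjoint. So \<open>\<psi> \<mapsto> \<psi>\<^sub>s\<close> inverts \<open>L\<^sub>\<bbbA>\<close> precisely under (2), which gives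
  (1) \<open>\<Leftrightarrow>\<close> (2), and \<open>L\<^sub>\<bbbA>\<close> preserves homs. In each of these identities the non-trivial
  inequality is obtained by inserting a unit \<open>1 \<le> \<Or>\<^sub>a \<phi>(a)\<^sup>o \<phi>(a)\<close> of a symmetric left adjoint.
\<close>

locale inv_quantaloid =
  fixes Q :: "('o, 'm) quantaloid"
  assumes involutive: "involutive_quantaloid Q"
begin

abbreviation comp (infixl "\<odot>" 70) where "g \<odot> f \<equiv> qcomp Q g f"
abbreviation le (infix "\<preceq>" 50) where "f \<preceq> g \<equiv> qle Q f g"
abbreviation conv ("_\<^sup>o" [1000] 1000) where "f\<^sup>o \<equiv> qinv Q f"
abbreviation hom where "hom \<equiv> qhom Q"
abbreviation obj where "obj \<equiv> qobj Q"
abbreviation idm where "idm \<equiv> qid Q"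
abbreviation jn where "jn \<equiv> qsup Q"
abbreviation mt where "mt \<equiv> qmeet Q"

lemmas axioms = involutive[unfolded involutive_quantaloid_def quantaloid_def]

subsection \<open>Arithmetic in the hom-sets\<close>

lemma id_in [simp]: "X \<in> obj \<Longrightarrow> idm X \<in> hom X X"
  using axioms by meson

lemma comp_in:
  "\<lbrakk>X \<in> obj; Y \<in> obj; Z \<in> obj; f \<in> hom X Y; g \<in> hom Y Z\<rbrakk> \<Longrightarrow> g \<odot> f \<in> hom X Z"
  using axioms by meson

lemma comp_assoc:
  "\<lbrakk>X \<in> obj; Y \<in> obj; Z \<in> obj; W \<in> obj; f \<in> hom X Y; g \<in> hom Y Z; h \<in> hom Z W\<rbrakk>
   \<Longrightarrow> h \<odot> (g \<odot> f) = (h \<odot> g) \<odot> f"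
  using axioms by meson

lemma id_comp [simp]: "\<lbrakk>X \<in> obj; Y \<in> obj; f \<in> hom X Y\<rbrakk> \<Longrightarrow> idm Y \<odot> f = f"
  using axioms by meson

lemma comp_id [simp]: "\<lbrakk>X \<in> obj; Y \<in> obj; f \<in> hom X Y\<rbrakk> \<Longrightarrow> f \<odot> idm X = f"
  using axioms by meson

lemma le_refl [simp]: "\<lbrakk>X \<in> obj; Y \<in> obj; f \<in> hom X Y\<rbrakk> \<Longrightarrow> f \<preceq> f"
  using axioms by meson

lemma le_trans:
  "\<lbrakk>X \<in> obj; Y \<in> obj; f \<in> hom X Y; g \<in> hom X Y; h \<in> hom X Y; f \<preceq> g; g \<preceq> h\<rbrakk> \<Longrightarrow> f \<preceq> h"
  using axioms by meson

lemma le_antisym: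
  "\<lbrakk>X \<in> obj; Y \<in> obj; f \<in> hom X Y; g \<in> hom X Y; f \<preceq> g; g \<preceq> f\<rbrakk> \<Longrightarrow> f = g"
  using axioms by meson

lemma join_in [simp]: "\<lbrakk>X \<in> obj; Y \<in> obj; S \<subseteq> hom X Y\<rbrakk> \<Longrightarrow> jn X Y S \<in> hom X Y"
  using axioms by meson

lemma join_upper: "\<lbrakk>X \<in> obj; Y \<in> obj; S \<subseteq> hom X Y; s \<in> S\<rbrakk> \<Longrightarrow> s \<preceq> jn X Y S"
  using axioms by meson

lemma join_least:
  "\<lbrakk>X \<in> obj; Y \<in> obj; S \<subseteq> hom X Y; u \<in> hom X Y; \<And>s. s \<in> S \<Longrightarrow> s \<preceq> u\<rbrakk> \<Longrightarrow> jn X Y S \<preceq> u"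
  using axioms by meson

lemma join_comp:
  "\<lbrakk>X \<in> obj; Y \<in> obj; Z \<in> obj; f \<in> hom X Y; S \<subseteq> hom Y Z\<rbrakk>
   \<Longrightarrow> jn Y Z S \<odot> f = jn X Z ((\<lambda>g. g \<odot> f) ` S)"
  using axioms by meson

lemma comp_join:
  "\<lbrakk>X \<in> obj; Y \<in> obj; Z \<in> obj; g \<in> hom Y Z; S \<subseteq> hom X Y\<rbrakk>
   \<Longrightarrow> g \<odot> jn X Y S = jn X Z ((\<lambda>f. g \<odot> f) ` S)"
  using axioms by meson

lemma conv_in [simp]: "\<lbrakk>X \<in> obj; Y \<in> obj; f \<in> hom X Y\<rbrakk> \<Longrightarrow> f\<^sup>o \<in> hom Y X"
  using axioms by meson

lemma conv_conv [simp]: "\<lbrakk>X \<in> obj; Y \<in> obj; f \<in> hom X Y\<rbrakk> \<Longrightarrow> f\<^sup>o\<^sup>o = f"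
  using axioms by meson

lemma conv_mono: "\<lbrakk>X \<in> obj; Y \<in> obj; f \<in> hom X Y; g \<in> hom X Y; f \<preceq> g\<rbrakk> \<Longrightarrow> f\<^sup>o \<preceq> g\<^sup>o"
  using axioms by meson

lemma conv_comp:
  "\<lbrakk>X \<in> obj; Y \<in> obj; Z \<in> obj; f \<in> hom X Y; g \<in> hom Y Z\<rbrakk> \<Longrightarrow> (g \<odot> f)\<^sup>o = f\<^sup>o \<odot> g\<^sup>o"
  using axioms by meson

lemma join_pair: "\<lbrakk>X \<in> obj; Y \<in> obj; f \<in> hom X Y; g \<in> hom X Y; f \<preceq> g\<rbrakk> \<Longrightarrow> jn X Y {f, g} = g"
  by (rule le_antisym) (auto intro: join_least join_upper)

lemma comp_mono_right:
  assumes "X \<in> obj" "Y \<in> obj" "Z \<in> obj" "f \<in> hom X Y" "f' \<in> hom X Y" "g \<in> hom Y Z" "f \<preceq> f'"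
  shows "g \<odot> f \<preceq> g \<odot> f'"
proof -
  have "g \<odot> f' = jn X Z {g \<odot> f, g \<odot> f'}"
    using comp_join[of X Y Z g "{f, f'}"] join_pair[of X Y f f'] assms by auto
  then show ?thesis
    using join_upper[of X Z "{g \<odot> f, g \<odot> f'}"] assms comp_in[of X Y Z] by auto
qed

lemma comp_mono_left:
  assumes "X \<in> obj" "Y \<in> obj" "Z \<in> obj" "g \<in> hom Y Z" "g' \<in> hom Y Z" "f \<in> hom X Y" "g \<preceq> g'"
  shows "g \<odot> f \<preceq> g' \<odot> f"
proof -
  have "g' \<odot> f = jn X Z {g \<odot> f, g' \<odot> f}"
    using join_comp[of X Y Z f "{g, g'}"] join_pair[of Y Z g g'] assms by auto
  then show ?thesis
    using join_upper[of X Z "{g \<odot> f, g' \<odot> f}"] assms comp_in[of X Y Z] by auto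
qed

lemma conv_id [simp]: "X \<in> obj \<Longrightarrow> (idm X)\<^sup>o = idm X"
  by (metis comp_id conv_comp conv_conv conv_in id_in)

lemma join_le_iff:
  "\<lbrakk>X \<in> obj; Y \<in> obj; S \<subseteq> hom X Y; u \<in> hom X Y\<rbrakk> \<Longrightarrow> jn X Y S \<preceq> u \<longleftrightarrow> (\<forall>s\<in>S. s \<preceq> u)"
  by (meson join_in join_least join_upper subsetD le_trans)

lemma join_mono:
  "\<lbrakk>X \<in> obj; Y \<in> obj; S \<subseteq> hom X Y; T \<subseteq> hom X Y; \<And>s. s \<in> S \<Longrightarrow> \<exists>t\<in>T. s \<preceq> t\<rbrakk>
   \<Longrightarrow> jn X Y S \<preceq> jn X Y T"
  by (meson join_in join_least join_upper subsetD le_trans)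

lemma join_comp_le:
  "\<lbrakk>X \<in> obj; Y \<in> obj; Z \<in> obj; f \<in> hom X Y; S \<subseteq> hom Y Z; u \<in> hom X Z;
    \<And>s. s \<in> S \<Longrightarrow> s \<odot> f \<preceq> u\<rbrakk> \<Longrightarrow> jn Y Z S \<odot> f \<preceq> u"
  by (subst join_comp) (auto intro!: join_least comp_in[of X Y Z])

lemma comp_join_le:
  "\<lbrakk>X \<in> obj; Y \<in> obj; Z \<in> obj; g \<in> hom Y Z; S \<subseteq> hom X Y; u \<in> hom X Z;
    \<And>s. s \<in> S \<Longrightarrow> g \<odot> s \<preceq> u\<rbrakk> \<Longrightarrow> g \<odot> jn X Y S \<preceq> u"
  by (subst comp_join) (auto intro!: join_least comp_in[of X Y Z])

lemma conv_join:
  assumes "X \<in> obj" "Y \<in> obj" "S \<subseteq> hom X Y"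
  shows "(jn X Y S)\<^sup>o = jn Y X (conv ` S)"
proof -
  have conv_S: "conv ` S \<subseteq> hom Y X"
    using assms by auto
  show ?thesis
  proof (rule le_antisym[of Y X])
    have "jn X Y S \<preceq> (jn Y X (conv ` S))\<^sup>o"
    proof (rule join_least)
      fix s assume "s \<in> S"
      then show "s \<preceq> (jn Y X (conv ` S))\<^sup>o"
        using assms conv_S conv_mono[of Y X "s\<^sup>o" "jn Y X (conv ` S)"] join_upper[of Y X "conv ` S"]
        by (auto simp: subsetD)
    qed (use assms conv_S in auto)
    then show "(jn X Y S)\<^sup>o \<preceq> jn Y X (conv ` S)"
      using assms conv_S conv_mono[of X Y "jn X Y S" "(jn Y X (conv ` S))\<^sup>o"] by auto
    show "jn Y X (conv ` S) \<preceq> (jn X Y S)\<^sup>o"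
      using assms conv_S conv_mono[of X Y _ "jn X Y S"] join_upper[of X Y S]
      by (auto intro!: join_least simp: subsetD)
  qed (use assms conv_S in auto)
qed

lemma image_comp_in:
  assumes "X \<in> obj" "Z \<in> obj" "\<And>i. i \<in> I \<Longrightarrow> T i \<in> obj"
    and "\<And>i. i \<in> I \<Longrightarrow> f i \<in> hom X (T i)" "\<And>i. i \<in> I \<Longrightarrow> g i \<in> hom (T i) Z"
  shows "(\<lambda>i. g i \<odot> f i) ` I \<subseteq> hom X Z"
proof (rule image_subsetI)
  fix i assume "i \<in> I"
  then show "g i \<odot> f i \<in> hom X Z"
    using assms by (intro comp_in[of X "T i" Z]) auto
qed

lemma meet_in [simp]: "\<lbrakk>X \<in> obj; Y \<in> obj\<rbrakk> \<Longrightarrow> mt X Y f g \<in> hom X Y"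
  unfolding qmeet_def by simp

lemma meet_le1: "\<lbrakk>X \<in> obj; Y \<in> obj; f \<in> hom X Y\<rbrakk> \<Longrightarrow> mt X Y f g \<preceq> f"
  unfolding qmeet_def by (auto intro!: join_least)

lemma meet_le2: "\<lbrakk>X \<in> obj; Y \<in> obj; g \<in> hom X Y\<rbrakk> \<Longrightarrow> mt X Y f g \<preceq> g"
  unfolding qmeet_def by (auto intro!: join_least)

lemma meet_greatest: "\<lbrakk>X \<in> obj; Y \<in> obj; h \<in> hom X Y; h \<preceq> f; h \<preceq> g\<rbrakk> \<Longrightarrow> h \<preceq> mt X Y f g"
  unfolding qmeet_def by (rule join_upper) auto

text \<open>Inequalities between typed arrows; this form lets calculations chain with
  \<open>also\<close>/\<open>finally\<close> without re-proving the typing at each step.\<close>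

definition hle :: "'o \<Rightarrow> 'o \<Rightarrow> 'm \<Rightarrow> 'm \<Rightarrow> bool" where
  "hle X Y f g \<longleftrightarrow> X \<in> obj \<and> Y \<in> obj \<and> f \<in> hom X Y \<and> g \<in> hom X Y \<and> f \<preceq> g"

lemma hleI: "\<lbrakk>X \<in> obj; Y \<in> obj; f \<in> hom X Y; g \<in> hom X Y; f \<preceq> g\<rbrakk> \<Longrightarrow> hle X Y f g"
  unfolding hle_def by blast

lemma hleD:
  "hle X Y f g \<Longrightarrow> f \<preceq> g" "hle X Y f g \<Longrightarrow> f \<in> hom X Y" "hle X Y f g \<Longrightarrow> g \<in> hom X Y"
  "hle X Y f g \<Longrightarrow> X \<in> obj" "hle X Y f g \<Longrightarrow> Y \<in> obj"
  unfolding hle_def by blast+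

lemma hle_trans [trans]: "\<lbrakk>hle X Y f g; hle X Y g h\<rbrakk> \<Longrightarrow> hle X Y f h"
  unfolding hle_def using le_trans by blast

lemma hle_antisym: "\<lbrakk>hle X Y f g; hle X Y g f\<rbrakk> \<Longrightarrow> f = g"
  unfolding hle_def using le_antisym by blast

lemma hle_comp_left: "\<lbrakk>hle Y Z g g'; X \<in> obj; f \<in> hom X Y\<rbrakk> \<Longrightarrow> hle X Z (g \<odot> f) (g' \<odot> f)"
  unfolding hle_def using comp_mono_left[of X Y Z g g' f] comp_in[of X Y Z] by blast

lemma hle_comp_right: "\<lbrakk>hle X Y f f'; Z \<in> obj; g \<in> hom Y Z\<rbrakk> \<Longrightarrow> hle X Z (g \<odot> f) (g \<odot> f')"
  unfolding hle_def using comp_mono_right[of X Y Z f f' g] comp_in[of X Y Z] by blast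

lemma hle_comp:
  assumes "hle Y Z g g'" "hle X Y f f'"
  shows "hle X Z (g \<odot> f) (g' \<odot> f')"
  using hle_trans[OF hle_comp_left[OF assms(1) hleD(4)[OF assms(2)] hleD(2)[OF assms(2)]]
      hle_comp_right[OF assms(2) hleD(5)[OF assms(1)] hleD(3)[OF assms(1)]]] .

lemma hle_conv: "hle X Y f g \<Longrightarrow> hle Y X f\<^sup>o g\<^sup>o"
  unfolding hle_def using conv_mono[of X Y f g] by simp

lemma hle_join_upper: "\<lbrakk>X \<in> obj; Y \<in> obj; S \<subseteq> hom X Y; s \<in> S\<rbrakk> \<Longrightarrow> hle X Y s (jn X Y S)"
  unfolding hle_def using join_upper[of X Y S s] by (simp add: subsetD)

lemma hle_join_mono:
  "\<lbrakk>X \<in> obj; Y \<in> obj; S \<subseteq> hom X Y; T \<subseteq> hom X Y; \<And>s. s \<in> S \<Longrightarrow> \<exists>t\<in>T. s \<preceq> t\<rbrakk>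
   \<Longrightarrow> hle X Y (jn X Y S) (jn X Y T)"
  unfolding hle_def using join_mono[of X Y S T] by simp

lemma hle_meetI: "\<lbrakk>hle X Y h f; hle X Y h g\<rbrakk> \<Longrightarrow> hle X Y h (mt X Y f g)"
  unfolding hle_def using meet_greatest[of X Y h f g] by simp

lemma hle_meet1: "\<lbrakk>X \<in> obj; Y \<in> obj; f \<in> hom X Y\<rbrakk> \<Longrightarrow> hle X Y (mt X Y f g) f"
  unfolding hle_def using meet_le1[of X Y f g] by simp

lemma hle_meet2: "\<lbrakk>X \<in> obj; Y \<in> obj; g \<in> hom X Y\<rbrakk> \<Longrightarrow> hle X Y (mt X Y f g) g"
  unfolding hle_def using meet_le2[of X Y g f] by simp

lemma le_join_via_unit_left:
  assumes X: "X \<in> obj" and Y: "Y \<in> obj" and T: "\<And>i. i \<in> I \<Longrightarrow> T i \<in> obj"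
    and f: "\<And>i. i \<in> I \<Longrightarrow> f i \<in> hom X (T i)" and g: "\<And>i. i \<in> I \<Longrightarrow> g i \<in> hom (T i) X"
    and k: "\<And>i. i \<in> I \<Longrightarrow> k i \<in> hom Y (T i)" and h: "h \<in> hom Y X"
    and unit: "idm X \<preceq> jn X X ((\<lambda>i. g i \<odot> f i) ` I)"
    and bound: "\<And>i. i \<in> I \<Longrightarrow> f i \<odot> h \<preceq> k i"
  shows "h \<preceq> jn Y X ((\<lambda>i. g i \<odot> k i) ` I)"
proof -
  have unit_sub: "(\<lambda>i. g i \<odot> f i) ` I \<subseteq> hom X X"
    by (rule image_comp_in[where T = T]) (use X T f g in auto)
  have sub: "(\<lambda>i. g i \<odot> k i) ` I \<subseteq> hom Y X"
    by (rule image_comp_in[where T = T]) (use X Y T g k in auto)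
  have "h = idm X \<odot> h"
    using X Y h by simp
  also have "hle Y X \<dots> (jn X X ((\<lambda>i. g i \<odot> f i) ` I) \<odot> h)"
    by (rule hle_comp_left[OF hleI Y h]) (use X unit unit_sub in auto)
  also have "hle Y X \<dots> (jn Y X ((\<lambda>i. g i \<odot> k i) ` I))"
  proof (rule hleI)
    show "jn X X ((\<lambda>i. g i \<odot> f i) ` I) \<odot> h \<preceq> jn Y X ((\<lambda>i. g i \<odot> k i) ` I)"
    proof (rule join_comp_le[OF Y X X h unit_sub])
      fix s assume "s \<in> (\<lambda>i. g i \<odot> f i) ` I"
      then obtain i where i: "i \<in> I" and s: "s = g i \<odot> f i"
        by auto
      have in_i: "T i \<in> obj" "f i \<in> hom X (T i)" "g i \<in> hom (T i) X" "k i \<in> hom Y (T i)"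
        using i T f g k by auto
      have "s \<odot> h = g i \<odot> (f i \<odot> h)"
        using s comp_assoc[OF Y X in_i(1) X h in_i(2,3)] by simp
      also have "hle Y X \<dots> (g i \<odot> k i)"
        by (rule hle_comp_right[OF hleI X in_i(3)]) (use Y in_i h bound i comp_in[OF Y X in_i(1)] in auto)
      also have "hle Y X \<dots> (jn Y X ((\<lambda>i. g i \<odot> k i) ` I))"
        by (rule hle_join_upper[OF Y X sub]) (use i in auto)
      finally show "s \<odot> h \<preceq> jn Y X ((\<lambda>i. g i \<odot> k i) ` I)"
        by (rule hleD)
    qed (use X Y sub in auto)
  qed (use X Y h unit_sub sub comp_in[OF Y X X] in auto)
  finally show ?thesis
    by (rule hleD)
qed

lemma le_join_via_unit_right:
  assumes X: "X \<in> obj" and Y: "Y \<in> obj" and T: "\<And>i. i \<in> I \<Longrightarrow> T i \<in> obj"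
    and f: "\<And>i. i \<in> I \<Longrightarrow> f i \<in> hom X (T i)" and g: "\<And>i. i \<in> I \<Longrightarrow> g i \<in> hom (T i) X"
    and l: "\<And>i. i \<in> I \<Longrightarrow> l i \<in> hom (T i) Y" and k: "k \<in> hom X Y"
    and unit: "idm X \<preceq> jn X X ((\<lambda>i. g i \<odot> f i) ` I)"
    and bound: "\<And>i. i \<in> I \<Longrightarrow> k \<odot> g i \<preceq> l i"
  shows "k \<preceq> jn X Y ((\<lambda>i. l i \<odot> f i) ` I)"
proof -
  have unit_sub: "(\<lambda>i. g i \<odot> f i) ` I \<subseteq> hom X X"
    by (rule image_comp_in[where T = T]) (use X T f g in auto)
  have sub: "(\<lambda>i. l i \<odot> f i) ` I \<subseteq> hom X Y"
    by (rule image_comp_in[where T = T]) (use X Y T f l in auto)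
  have "k = k \<odot> idm X"
    using X Y k by simp
  also have "hle X Y \<dots> (k \<odot> jn X X ((\<lambda>i. g i \<odot> f i) ` I))"
    by (rule hle_comp_right[OF hleI Y k]) (use X unit unit_sub in auto)
  also have "hle X Y \<dots> (jn X Y ((\<lambda>i. l i \<odot> f i) ` I))"
  proof (rule hleI)
    show "k \<odot> jn X X ((\<lambda>i. g i \<odot> f i) ` I) \<preceq> jn X Y ((\<lambda>i. l i \<odot> f i) ` I)"
    proof (rule comp_join_le[OF X X Y k unit_sub])
      fix s assume "s \<in> (\<lambda>i. g i \<odot> f i) ` I"
      then obtain i where i: "i \<in> I" and s: "s = g i \<odot> f i"
        by auto
      have in_i: "T i \<in> obj" "f i \<in> hom X (T i)" "g i \<in> hom (T i) X" "l i \<in> hom (T i) Y"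
        using i T f g l by auto
      have "k \<odot> s = (k \<odot> g i) \<odot> f i"
        using s comp_assoc[OF X in_i(1) X Y in_i(2,3) k] by simp
      also have "hle X Y \<dots> (l i \<odot> f i)"
        by (rule hle_comp_left[OF hleI X in_i(2)]) (use Y in_i k bound i comp_in[OF in_i(1) X Y] in auto)
      also have "hle X Y \<dots> (jn X Y ((\<lambda>i. l i \<odot> f i) ` I))"
        by (rule hle_join_upper[OF X Y sub]) (use i in auto)
      finally show "k \<odot> s \<preceq> jn X Y ((\<lambda>i. l i \<odot> f i) ` I)"
        by (rule hleD)
    qed (use X Y sub in auto)
  qed (use X Y k unit_sub sub comp_in[OF X X Y] in auto)
  finally show ?thesis
    by (rule hleD)
qed

subsection \<open>Categories, distributors and symmetrisation\<close>

lemma cat_ty [simp]: "\<lbrakk>qcategory Q A; x \<in> cob A\<rbrakk> \<Longrightarrow> cty A x \<in> obj"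
  unfolding qcategory_def by blast

lemma cat_hom_in [simp]:
  "\<lbrakk>qcategory Q A; x \<in> cob A; y \<in> cob A\<rbrakk> \<Longrightarrow> chom A y x \<in> hom (cty A x) (cty A y)"
  unfolding qcategory_def by blast

lemma cat_comp_le:
  "\<lbrakk>qcategory Q A; x \<in> cob A; y \<in> cob A; z \<in> cob A\<rbrakk> \<Longrightarrow> chom A z y \<odot> chom A y x \<preceq> chom A z x"
  unfolding qcategory_def by blast

lemma cat_id_le: "\<lbrakk>qcategory Q A; x \<in> cob A\<rbrakk> \<Longrightarrow> idm (cty A x) \<preceq> chom A x x"
  unfolding qcategory_def by blast

lemma hle_cat_comp:
  "\<lbrakk>qcategory Q A; x \<in> cob A; y \<in> cob A; z \<in> cob A\<rbrakk>
   \<Longrightarrow> hle (cty A x) (cty A z) (chom A z y \<odot> chom A y x) (chom A z x)"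
  by (rule hleI) (simp_all add: cat_comp_le comp_in[of "cty A x" "cty A y" "cty A z"])

lemma distributor_in [simp]:
  "\<lbrakk>distributor Q A B \<Phi>; x \<in> cob A; y \<in> cob B\<rbrakk> \<Longrightarrow> \<Phi> y x \<in> hom (cty A x) (cty B y)"
  unfolding distributor_def by blast

lemma distributor_left_le:
  "\<lbrakk>distributor Q A B \<Phi>; x \<in> cob A; y \<in> cob B; y' \<in> cob B\<rbrakk>
   \<Longrightarrow> chom B y' y \<odot> \<Phi> y x \<preceq> \<Phi> y' x"
  unfolding distributor_def by blast

lemma distributor_right_le:
  "\<lbrakk>distributor Q A B \<Phi>; x \<in> cob A; x' \<in> cob A; y \<in> cob B\<rbrakk>
   \<Longrightarrow> \<Phi> y x \<odot> chom A x x' \<preceq> \<Phi> y x'"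
  unfolding distributor_def by blast

lemma distributor_undefined:
  "\<lbrakk>distributor Q A B \<Phi>; \<not> (y \<in> cob B \<and> x \<in> cob A)\<rbrakk> \<Longrightarrow> \<Phi> y x = undefined"
  unfolding distributor_def by blast

lemma cob_symz [simp]: "cob (symz Q A) = cob A"
  by (simp add: symz_def)

lemma cty_symz [simp]: "cty (symz Q A) = cty A"
  by (simp add: symz_def)

lemma chom_symz:
  "\<lbrakk>x \<in> cob A; y \<in> cob A\<rbrakk> \<Longrightarrow> chom (symz Q A) y x = mt (cty A x) (cty A y) (chom A y x) (chom A x y)\<^sup>o"
  by (simp add: symz_def)

lemma symz_hom_in [simp]:
  "\<lbrakk>qcategory Q A; x \<in> cob A; y \<in> cob A\<rbrakk> \<Longrightarrow> chom (symz Q A) y x \<in> hom (cty A x) (cty A y)"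
  by (simp add: chom_symz)

lemma symz_le_chom:
  "\<lbrakk>qcategory Q A; x \<in> cob A; y \<in> cob A\<rbrakk> \<Longrightarrow> chom (symz Q A) y x \<preceq> chom A y x"
  by (simp add: chom_symz meet_le1)

lemma symz_le_conv_chom:
  "\<lbrakk>qcategory Q A; x \<in> cob A; y \<in> cob A\<rbrakk> \<Longrightarrow> chom (symz Q A) y x \<preceq> (chom A x y)\<^sup>o"
  by (simp add: chom_symz meet_le2)

lemma le_symzI:
  "\<lbrakk>qcategory Q A; x \<in> cob A; y \<in> cob A; h \<in> hom (cty A x) (cty A y); h \<preceq> chom A y x;
    h \<preceq> (chom A x y)\<^sup>o\<rbrakk> \<Longrightarrow> h \<preceq> chom (symz Q A) y x"
  by (simp add: chom_symz meet_greatest)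

lemma hle_cat_id: "\<lbrakk>qcategory Q A; x \<in> cob A\<rbrakk> \<Longrightarrow> hle (cty A x) (cty A x) (idm (cty A x)) (chom A x x)"
  by (simp add: hleI cat_id_le)

lemma hle_symz_chom:
  "\<lbrakk>qcategory Q A; x \<in> cob A; y \<in> cob A\<rbrakk>
   \<Longrightarrow> hle (cty A x) (cty A y) (chom (symz Q A) y x) (chom A y x)"
  by (simp add: hleI symz_le_chom)

lemma hle_symz_conv_chom:
  "\<lbrakk>qcategory Q A; x \<in> cob A; y \<in> cob A\<rbrakk>
   \<Longrightarrow> hle (cty A x) (cty A y) (chom (symz Q A) y x) (chom A x y)\<^sup>o"
  by (simp add: hleI symz_le_conv_chom)

lemma conv_symz_le:
  assumes A: "qcategory Q A" and x: "x \<in> cob A" and y: "y \<in> cob A"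
  shows "(chom (symz Q A) y x)\<^sup>o \<preceq> chom (symz Q A) x y"
proof (rule le_symzI[OF A y x])
  show "(chom (symz Q A) y x)\<^sup>o \<preceq> chom A x y"
    using hleD(1)[OF hle_conv[OF hle_symz_conv_chom[OF A x y]]]
      conv_conv[of "cty A y" "cty A x" "chom A x y"] A x y by simp
  show "(chom (symz Q A) y x)\<^sup>o \<preceq> (chom A y x)\<^sup>o"
    using hleD(1)[OF hle_conv[OF hle_symz_chom[OF A x y]]] .
qed (use A x y in simp)

lemma qcategory_symz:
  assumes A: "qcategory Q A"
  shows "qcategory Q (symz Q A)"
  unfolding qcategory_def
proof (intro conjI ballI)
  fix x assume x: "x \<in> cob (symz Q A)"
  then show "cty (symz Q A) x \<in> obj"
    using A by simp
  have "(idm (cty A x))\<^sup>o \<preceq> (chom A x x)\<^sup>o"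
    using hleD(1)[OF hle_conv[OF hle_cat_id[OF A]]] x by simp
  then show "idm (cty (symz Q A) x) \<preceq> chom (symz Q A) x x"
    using le_symzI[OF A, of x x "idm (cty A x)"] cat_id_le[OF A, of x] A x by simp
next
  fix x y assume "x \<in> cob (symz Q A)" "y \<in> cob (symz Q A)"
  then show "chom (symz Q A) y x \<in> hom (cty (symz Q A) x) (cty (symz Q A) y)"
    using A by simp
next
  fix x y z assume "x \<in> cob (symz Q A)" "y \<in> cob (symz Q A)" "z \<in> cob (symz Q A)"
  then have x: "x \<in> cob A" and y: "y \<in> cob A" and z: "z \<in> cob A"
    by auto
  let ?X = "cty A x" and ?Y = "cty A y" and ?Z = "cty A z"
  let ?c = "chom (symz Q A) z y \<odot> chom (symz Q A) y x"
  have "hle ?X ?Z ?c (chom A z y \<odot> chom A y x)"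
    by (rule hle_comp[OF hle_symz_chom[OF A y z] hle_symz_chom[OF A x y]])
  also have "hle ?X ?Z \<dots> (chom A z x)"
    by (rule hle_cat_comp[OF A x y z])
  finally have le1: "hle ?X ?Z ?c (chom A z x)" .
  have "hle ?X ?Z ?c ((chom A y z)\<^sup>o \<odot> (chom A x y)\<^sup>o)"
    by (rule hle_comp[OF hle_symz_conv_chom[OF A y z] hle_symz_conv_chom[OF A x y]])
  also have "(chom A y z)\<^sup>o \<odot> (chom A x y)\<^sup>o = (chom A x y \<odot> chom A y z)\<^sup>o"
    using conv_comp[of ?Z ?Y ?X] A x y z by simp
  also have "hle ?X ?Z \<dots> (chom A x z)\<^sup>o"
    by (rule hle_conv[OF hle_cat_comp[OF A z y x]])
  finally have le2: "hle ?X ?Z ?c (chom A x z)\<^sup>o" .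
  show "?c \<preceq> chom (symz Q A) z x"
    using le_symzI[OF A x z] le1 le2 by (simp add: hleD)
qed

subsection \<open>Adjoint distributors\<close>

lemma is_adj_iff:
  assumes A: "qcategory Q A" and B: "qcategory Q B"
  shows "is_adj Q A B \<Phi> \<Psi> \<longleftrightarrow> distributor Q A B \<Phi> \<and> distributor Q B A \<Psi> \<and>
    (\<forall>x\<in>cob A. \<forall>x'\<in>cob A. chom A x' x \<preceq> jn (cty A x) (cty A x') ((\<lambda>y. \<Psi> x' y \<odot> \<Phi> y x) ` cob B)) \<and>
    (\<forall>x\<in>cob A. \<forall>y\<in>cob B. \<forall>y'\<in>cob B. \<Phi> y' x \<odot> \<Psi> x y \<preceq> chom B y' y)"
proof -
  have counit: "dle Q B B (dcomp Q B A B \<Phi> \<Psi>) (chom B) \<longleftrightarrow>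
      (\<forall>x\<in>cob A. \<forall>y\<in>cob B. \<forall>y'\<in>cob B. \<Phi> y' x \<odot> \<Psi> x y \<preceq> chom B y' y)"
    if \<Phi>: "distributor Q A B \<Phi>" and \<Psi>: "distributor Q B A \<Psi>"
  proof -
    have "jn (cty B y) (cty B y') ((\<lambda>x. \<Phi> y' x \<odot> \<Psi> x y) ` cob A) \<preceq> chom B y' y \<longleftrightarrow>
        (\<forall>x\<in>cob A. \<Phi> y' x \<odot> \<Psi> x y \<preceq> chom B y' y)" if "y \<in> cob B" "y' \<in> cob B" for y y'
    proof -
      have "(\<lambda>x. \<Phi> y' x \<odot> \<Psi> x y) ` cob A \<subseteq> hom (cty B y) (cty B y')"
        by (rule image_comp_in[where T = "cty A"]) (use A B \<Phi> \<Psi> that in auto)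
      then show ?thesis
        using join_le_iff[of "cty B y" "cty B y'"] A B that by auto
    qed
    then show ?thesis
      unfolding dle_def dcomp_def by auto
  qed
  show ?thesis
    unfolding is_adj_def using counit by (auto simp: dle_def dcomp_def)
qed

text \<open>Uniqueness of right adjoints, by the usual argument
  \<open>\<Psi>\<^sub>1 \<le> \<Psi>\<^sub>2 \<otimes> \<Phi> \<otimes> \<Psi>\<^sub>1 \<le> \<Psi>\<^sub>2\<close>.\<close>

lemma is_adj_right_le:
  assumes A: "qcategory Q A" and B: "qcategory Q B"
    and adj1: "is_adj Q A B \<Phi> \<Psi>1" and adj2: "is_adj Q A B \<Phi> \<Psi>2"
    and x: "x \<in> cob A" and y: "y \<in> cob B"
  shows "\<Psi>1 x y \<preceq> \<Psi>2 x y"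
proof -
  note adj1' = adj1[unfolded is_adj_iff[OF A B]] and adj2' = adj2[unfolded is_adj_iff[OF A B]]
  let ?X = "cty A x" and ?Y = "cty B y"
  let ?J = "jn ?Y ?X ((\<lambda>y'. \<Psi>2 x y' \<odot> chom B y' y) ` cob B)"
  have obj: "?X \<in> obj" "?Y \<in> obj"
    using A B x y by auto
  have J_sub: "(\<lambda>y'. \<Psi>2 x y' \<odot> chom B y' y) ` cob B \<subseteq> hom ?Y ?X"
    by (rule image_comp_in[where T = "cty B"]) (use adj2' A B x y in auto)
  have "idm ?X \<preceq> jn ?X ?X ((\<lambda>y'. \<Psi>2 x y' \<odot> \<Phi> y' x) ` cob B)"
    using le_trans[OF obj(1,1) _ _ _ cat_id_le[OF A x]] adj2' x A B
      join_in[OF obj(1,1) image_comp_in[where T = "cty B"]] by auto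
  then have "\<Psi>1 x y \<preceq> ?J"
    by (rule le_join_via_unit_left[where T = "cty B", rotated -2]) (use adj1' adj2' A B x y in auto)
  moreover have "?J \<preceq> \<Psi>2 x y"
    by (rule join_least[OF obj(2,1) J_sub]) (use adj2' A B x y in \<open>auto simp: distributor_right_le\<close>)
  ultimately show ?thesis
    using le_trans[OF obj(2,1) _ join_in[OF obj(2,1) J_sub]] adj1' adj2' x y by auto
qed

lemma right_adjoint_unique:
  assumes A: "qcategory Q A" and B: "qcategory Q B"
    and adj1: "is_adj Q A B \<Phi> \<Psi>1" and adj2: "is_adj Q A B \<Phi> \<Psi>2"
  shows "\<Psi>1 = \<Psi>2"
proof (intro ext)
  fix x y
  show "\<Psi>1 x y = \<Psi>2 x y"
  proof (cases "x \<in> cob A \<and> y \<in> cob B")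
    case True
    then show ?thesis
      using is_adj_right_le[OF A B adj1 adj2] is_adj_right_le[OF A B adj2 adj1]
        le_antisym[of "cty B y" "cty A x"] adj1 adj2 A B by (auto simp: is_adj_iff)
  next
    case False
    then show ?thesis
      using distributor_undefined[of B A \<Psi>1 x y] distributor_undefined[of B A \<Psi>2 x y] adj1 adj2
      by (auto simp: is_adj_def)
  qed
qed

lemma radj_eqI: "\<lbrakk>qcategory Q A; qcategory Q B; is_adj Q A B \<Phi> \<Psi>\<rbrakk> \<Longrightarrow> radj Q A B \<Phi> = \<Psi>"
  unfolding radj_def using right_adjoint_unique by blast

lemma is_adj_radj: "\<lbrakk>qcategory Q A; qcategory Q B; ladj Q A B \<Phi>\<rbrakk> \<Longrightarrow> is_adj Q A B \<Phi> (radj Q A B \<Phi>)"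
  unfolding ladj_def using radj_eqI by metis

subsection \<open>The symmetrisation of a left adjoint\<close>

definition dmeet :: "('a, 'o, 'm) qcat \<Rightarrow> ('b, 'o, 'm) qcat
    \<Rightarrow> ('b \<Rightarrow> 'a \<Rightarrow> 'm) \<Rightarrow> ('b \<Rightarrow> 'a \<Rightarrow> 'm) \<Rightarrow> ('b \<Rightarrow> 'a \<Rightarrow> 'm)" where
  "dmeet A B \<Phi> \<Psi> = (\<lambda>y x. if y \<in> cob B \<and> x \<in> cob A
     then mt (cty A x) (cty B y) (\<Phi> y x) (\<Psi> y x) else undefined)"

lemma distributor_dmeet:
  assumes A: "qcategory Q A" and B: "qcategory Q B"
    and \<Phi>: "distributor Q A B \<Phi>" and \<Psi>: "distributor Q A B \<Psi>"
  shows "distributor Q A B (dmeet A B \<Phi> \<Psi>)"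
  unfolding distributor_def
proof (intro conjI ballI allI impI)
  fix x y y' assume x: "x \<in> cob A" and y: "y \<in> cob B" and y': "y' \<in> cob B"
  let ?X = "cty A x" and ?Y = "cty B y" and ?Y' = "cty B y'"
  have bound: "hle ?X ?Y' (chom B y' y \<odot> dmeet A B \<Phi> \<Psi> y x) (\<Theta> y' x)"
    if \<Theta>: "distributor Q A B \<Theta>" and meet_le: "hle ?X ?Y (dmeet A B \<Phi> \<Psi> y x) (\<Theta> y x)" for \<Theta>
  proof -
    have "hle ?X ?Y' (chom B y' y \<odot> dmeet A B \<Phi> \<Psi> y x) (chom B y' y \<odot> \<Theta> y x)"
      by (rule hle_comp_right[OF meet_le]) (use B y y' in simp_all)
    also have "hle ?X ?Y' \<dots> (\<Theta> y' x)"
      using distributor_left_le[OF \<Theta> x y y'] \<Theta> A B x y y'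
      by (intro hleI) (auto intro: comp_in[of ?X ?Y ?Y'])
    finally show ?thesis .
  qed
  have "hle ?X ?Y' (chom B y' y \<odot> dmeet A B \<Phi> \<Psi> y x) (dmeet A B \<Phi> \<Psi> y' x)"
    using hle_meetI[OF bound[OF \<Phi>] bound[OF \<Psi>]] hle_meet1 hle_meet2 \<Phi> \<Psi> A B x y y'
    by (simp add: dmeet_def)
  then show "chom B y' y \<odot> dmeet A B \<Phi> \<Psi> y x \<preceq> dmeet A B \<Phi> \<Psi> y' x"
    by (rule hleD)
next
  fix x x' y assume x: "x \<in> cob A" and x': "x' \<in> cob A" and y: "y \<in> cob B"
  let ?X = "cty A x" and ?X' = "cty A x'" and ?Y = "cty B y"
  have bound: "hle ?X' ?Y (dmeet A B \<Phi> \<Psi> y x \<odot> chom A x x') (\<Theta> y x')"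
    if \<Theta>: "distributor Q A B \<Theta>" and meet_le: "hle ?X ?Y (dmeet A B \<Phi> \<Psi> y x) (\<Theta> y x)" for \<Theta>
  proof -
    have "hle ?X' ?Y (dmeet A B \<Phi> \<Psi> y x \<odot> chom A x x') (\<Theta> y x \<odot> chom A x x')"
      by (rule hle_comp_left[OF meet_le]) (use A x x' in simp_all)
    also have "hle ?X' ?Y \<dots> (\<Theta> y x')"
      using distributor_right_le[OF \<Theta> x x' y] \<Theta> A B x x' y
      by (intro hleI) (auto intro: comp_in[of ?X' ?X ?Y])
    finally show ?thesis .
  qed
  have "hle ?X' ?Y (dmeet A B \<Phi> \<Psi> y x \<odot> chom A x x') (dmeet A B \<Phi> \<Psi> y x')"
    using hle_meetI[OF bound[OF \<Phi>] bound[OF \<Psi>]] hle_meet1 hle_meet2 \<Phi> \<Psi> A B x x' y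
    by (simp add: dmeet_def)
  then show "dmeet A B \<Phi> \<Psi> y x \<odot> chom A x x' \<preceq> dmeet A B \<Phi> \<Psi> y x'"
    by (rule hleD)
qed (use A B in \<open>auto simp: dmeet_def\<close>)

lemma distributor_symz:
  assumes A: "qcategory Q A" and B: "qcategory Q B" and \<Phi>: "distributor Q A B \<Phi>"
  shows "distributor Q (symz Q A) (symz Q B) \<Phi>"
  unfolding distributor_def
proof (intro conjI ballI allI impI)
  fix x y y' assume "x \<in> cob (symz Q A)" "y \<in> cob (symz Q B)" "y' \<in> cob (symz Q B)"
  then have x: "x \<in> cob A" and y: "y \<in> cob B" and y': "y' \<in> cob B"
    by simp_all
  have "hle (cty A x) (cty B y') (chom (symz Q B) y' y \<odot> \<Phi> y x) (chom B y' y \<odot> \<Phi> y x)"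
    by (rule hle_comp_left[OF hle_symz_chom[OF B y y']]) (use \<Phi> A x y in simp_all)
  also have "hle (cty A x) (cty B y') \<dots> (\<Phi> y' x)"
    using distributor_left_le[OF \<Phi> x y y'] \<Phi> A B x y y'
    by (intro hleI) (auto intro: comp_in[of "cty A x" "cty B y" "cty B y'"])
  finally show "chom (symz Q B) y' y \<odot> \<Phi> y x \<preceq> \<Phi> y' x"
    by (rule hleD)
next
  fix x x' y assume "x \<in> cob (symz Q A)" "x' \<in> cob (symz Q A)" "y \<in> cob (symz Q B)"
  then have x: "x \<in> cob A" and x': "x' \<in> cob A" and y: "y \<in> cob B"
    by simp_all
  have "hle (cty A x') (cty B y) (\<Phi> y x \<odot> chom (symz Q A) x x') (\<Phi> y x \<odot> chom A x x')"
    by (rule hle_comp_right[OF hle_symz_chom[OF A x' x]]) (use \<Phi> B x y in simp_all)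
  also have "hle (cty A x') (cty B y) \<dots> (\<Phi> y x')"
    using distributor_right_le[OF \<Phi> x x' y] \<Phi> A B x x' y
    by (intro hleI) (auto intro: comp_in[of "cty A x'" "cty A x" "cty B y"])
  finally show "\<Phi> y x \<odot> chom (symz Q A) x x' \<preceq> \<Phi> y x'"
    by (rule hleD)
qed (use \<Phi> in \<open>auto simp: distributor_def\<close>)

lemma dual_symz_left_le:
  assumes A: "qcategory Q A" and B: "qcategory Q B" and \<Phi>: "distributor Q (symz Q A) (symz Q B) \<Phi>"
    and b: "b \<in> cob B" and a: "a \<in> cob A" and a': "a' \<in> cob A"
  shows "chom (symz Q A) a' a \<odot> (\<Phi> b a)\<^sup>o \<preceq> (\<Phi> b a')\<^sup>o"
proof -
  let ?a = "cty A a" and ?a' = "cty A a'" and ?b = "cty B b"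
  have obj: "?a \<in> obj" "?a' \<in> obj" "?b \<in> obj"
    using A B a a' b by auto
  have in_\<Phi>: "\<Phi> b a \<in> hom ?a ?b" "\<Phi> b a' \<in> hom ?a' ?b"
    using distributor_in[OF \<Phi>] a a' b by auto
  have in_A: "chom (symz Q A) a' a \<in> hom ?a ?a'" "chom (symz Q A) a a' \<in> hom ?a' ?a"
    using A a a' by auto
  have "chom (symz Q A) a' a \<odot> (\<Phi> b a)\<^sup>o = (\<Phi> b a \<odot> (chom (symz Q A) a' a)\<^sup>o)\<^sup>o"
    using conv_comp[of ?a' ?a ?b "(chom (symz Q A) a' a)\<^sup>o" "\<Phi> b a"] obj in_\<Phi> in_A by simp
  also have "hle ?b ?a' \<dots> (\<Phi> b a')\<^sup>o"
  proof (rule hle_conv)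
    have "hle ?a' ?b (\<Phi> b a \<odot> (chom (symz Q A) a' a)\<^sup>o) (\<Phi> b a \<odot> chom (symz Q A) a a')"
      by (rule hle_comp_right[OF hleI obj(3) in_\<Phi>(1)]) (use obj in_A conv_symz_le[OF A] a a' in auto)
    also have "hle ?a' ?b \<dots> (\<Phi> b a')"
      using distributor_right_le[OF \<Phi>, of a a' b] a a' b
      by (intro hleI[OF obj(2,3) comp_in[OF obj(2,1,3) in_A(2) in_\<Phi>(1)] in_\<Phi>(2)]) simp
    finally show "hle ?a' ?b (\<Phi> b a \<odot> (chom (symz Q A) a' a)\<^sup>o) (\<Phi> b a')" .
  qed
  finally show ?thesis
    by (rule hleD)
qed

lemma dual_symz_right_le:
  assumes A: "qcategory Q A" and B: "qcategory Q B" and \<Phi>: "distributor Q (symz Q A) (symz Q B) \<Phi>"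
    and b: "b \<in> cob B" and b': "b' \<in> cob B" and a: "a \<in> cob A"
  shows "(\<Phi> b a)\<^sup>o \<odot> chom (symz Q B) b b' \<preceq> (\<Phi> b' a)\<^sup>o"
proof -
  let ?a = "cty A a" and ?b' = "cty B b'" and ?b = "cty B b"
  have obj: "?a \<in> obj" "?b' \<in> obj" "?b \<in> obj"
    using A B a b' b by auto
  have in_\<Phi>: "\<Phi> b a \<in> hom ?a ?b" "\<Phi> b' a \<in> hom ?a ?b'"
    using distributor_in[OF \<Phi>] a b' b by auto
  have in_B: "chom (symz Q B) b b' \<in> hom ?b' ?b" "chom (symz Q B) b' b \<in> hom ?b ?b'"
    using B b b' by auto
  have "(\<Phi> b a)\<^sup>o \<odot> chom (symz Q B) b b' = ((chom (symz Q B) b b')\<^sup>o \<odot> \<Phi> b a)\<^sup>o"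
    using conv_comp[of ?a ?b ?b' "\<Phi> b a" "(chom (symz Q B) b b')\<^sup>o"] obj in_\<Phi> in_B by simp
  also have "hle ?b' ?a \<dots> (\<Phi> b' a)\<^sup>o"
  proof (rule hle_conv)
    have "hle ?a ?b' ((chom (symz Q B) b b')\<^sup>o \<odot> \<Phi> b a) (chom (symz Q B) b' b \<odot> \<Phi> b a)"
      by (rule hle_comp_left[OF hleI obj(1) in_\<Phi>(1)]) (use obj in_B conv_symz_le[OF B] b b' in auto)
    also have "hle ?a ?b' \<dots> (\<Phi> b' a)"
      using distributor_left_le[OF \<Phi>, of a b b'] a b b'
      by (intro hleI[OF obj(1,2) comp_in[OF obj(1,3,2) in_\<Phi>(1) in_B(2)] in_\<Phi>(2)]) simp
    finally show "hle ?a ?b' ((chom (symz Q B) b b')\<^sup>o \<odot> \<Phi> b a) (\<Phi> b' a)" .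
  qed
  finally show ?thesis
    by (rule hleD)
qed

text \<open>Between symmetrisations the converse of a distributor is again one, because
  the homs of \<open>\<bbbA>\<^sub>s\<close> are closed under the involution.\<close>

lemma distributor_dual_symz:
  assumes A: "qcategory Q A" and B: "qcategory Q B"
    and \<Phi>: "distributor Q (symz Q A) (symz Q B) \<Phi>"
  shows "distributor Q (symz Q B) (symz Q A) (dual Q (symz Q A) (symz Q B) \<Phi>)"
  unfolding distributor_def
  using dual_symz_left_le[OF A B \<Phi>] dual_symz_right_le[OF A B \<Phi>] distributor_in[OF \<Phi>] A B
  by (auto simp: dual_def)

lemma dsym_eq:
  assumes "qcategory Q X" "qcategory Q A" "is_adj Q X A \<Psi> R" "x \<in> cob X" "a \<in> cob A"
  shows "dsym Q X A \<Psi> a x = mt (cty X x) (cty A a) (\<Psi> a x) (R x a)\<^sup>o"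
  using radj_eqI[OF assms(1-3)] assms(4,5) by (simp add: dsym_def)

lemma dsym_eq_dmeet:
  assumes "qcategory Q X" "qcategory Q A" "is_adj Q X A \<Psi> R"
  shows "dsym Q X A \<Psi> = dmeet (symz Q X) (symz Q A) \<Psi> (dual Q (symz Q A) (symz Q X) R)"
proof (intro ext)
  fix a x
  show "dsym Q X A \<Psi> a x = dmeet (symz Q X) (symz Q A) \<Psi> (dual Q (symz Q A) (symz Q X) R) a x"
    using dsym_eq[OF assms, of x a] by (auto simp: dmeet_def dual_def dsym_def)
qed

lemma distributor_dsym:
  assumes X: "qcategory Q X" and A: "qcategory Q A" and adj: "is_adj Q X A \<Psi> R"
  shows "distributor Q (symz Q X) (symz Q A) (dsym Q X A \<Psi>)"
  unfolding dsym_eq_dmeet[OF X A adj]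
proof (rule distributor_dmeet[OF qcategory_symz[OF X] qcategory_symz[OF A]])
  show "distributor Q (symz Q X) (symz Q A) \<Psi>"
    using distributor_symz[OF X A] adj by (simp add: is_adj_def)
  show "distributor Q (symz Q X) (symz Q A) (dual Q (symz Q A) (symz Q X) R)"
    using distributor_dual_symz[OF A X distributor_symz[OF A X]] adj by (simp add: is_adj_def)
qed

lemma hle_dsym:
  assumes X: "qcategory Q X" and A: "qcategory Q A" and adj: "is_adj Q X A \<Psi> R"
    and x: "x \<in> cob X" and a: "a \<in> cob A"
  shows "hle (cty X x) (cty A a) (dsym Q X A \<Psi> a x) (\<Psi> a x)"
    and "hle (cty X x) (cty A a) (dsym Q X A \<Psi> a x) (R x a)\<^sup>o"
    and "hle (cty A a) (cty X x) (dsym Q X A \<Psi> a x)\<^sup>o (R x a)"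
proof -
  have obj: "cty X x \<in> obj" "cty A a \<in> obj"
    using X A x a by auto
  have in_\<Psi>: "\<Psi> a x \<in> hom (cty X x) (cty A a)" and in_R: "R x a \<in> hom (cty A a) (cty X x)"
    using adj x a by (auto simp: is_adj_def)
  show "hle (cty X x) (cty A a) (dsym Q X A \<Psi> a x) (\<Psi> a x)"
    unfolding dsym_eq[OF X A adj x a] using hle_meet1[OF obj in_\<Psi>] .
  show le_R: "hle (cty X x) (cty A a) (dsym Q X A \<Psi> a x) (R x a)\<^sup>o"
    unfolding dsym_eq[OF X A adj x a] using hle_meet2[OF obj conv_in[OF obj(2,1) in_R]] .
  show "hle (cty A a) (cty X x) (dsym Q X A \<Psi> a x)\<^sup>o (R x a)"
    using hle_conv[OF le_R] obj in_R by simp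
qed

lemma dsym_in:
  assumes "qcategory Q X" "qcategory Q A" "is_adj Q X A \<Psi> R" "x \<in> cob X" "a \<in> cob A"
  shows "dsym Q X A \<Psi> a x \<in> hom (cty X x) (cty A a)"
  using hleD(2)[OF hle_dsym(1)[OF assms]] .

lemma dsym_counit:
  assumes X: "qcategory Q X" and A: "qcategory Q A" and adj: "is_adj Q X A \<Psi> R"
    and x: "x \<in> cob X" and a: "a \<in> cob A" and a': "a' \<in> cob A"
  shows "dsym Q X A \<Psi> a' x \<odot> (dsym Q X A \<Psi> a x)\<^sup>o \<preceq> chom (symz Q A) a' a"
proof -
  note adj' = adj[unfolded is_adj_iff[OF X A]]
  let ?x = "cty X x" and ?a = "cty A a" and ?a' = "cty A a'"
  let ?h = "dsym Q X A \<Psi> a' x \<odot> (dsym Q X A \<Psi> a x)\<^sup>o"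
  have obj: "?x \<in> obj" "?a \<in> obj" "?a' \<in> obj"
    using X A x a a' by auto
  have in_adj: "\<Psi> a x \<in> hom ?x ?a" "R x a \<in> hom ?a ?x" "\<Psi> a' x \<in> hom ?x ?a'" "R x a' \<in> hom ?a' ?x"
    using adj' x a a' by auto
  have "hle ?a ?a' ?h (\<Psi> a' x \<odot> R x a)"
    by (rule hle_comp[OF hle_dsym(1)[OF X A adj x a'] hle_dsym(3)[OF X A adj x a]])
  also have "hle ?a ?a' \<dots> (chom A a' a)"
    by (rule hleI[OF obj(2,3) comp_in[OF obj(2,1,3) in_adj(2,3)]]) (use adj' x a a' A in auto)
  finally have le_A: "hle ?a ?a' ?h (chom A a' a)" .
  have "hle ?a ?a' ?h ((R x a')\<^sup>o \<odot> (\<Psi> a x)\<^sup>o)"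
    by (rule hle_comp[OF hle_dsym(2)[OF X A adj x a'] hle_conv[OF hle_dsym(1)[OF X A adj x a]]])
  also have "\<dots> = (\<Psi> a x \<odot> R x a')\<^sup>o"
    using conv_comp[OF obj(3,1,2) in_adj(4,1)] by simp
  also have "hle ?a ?a' \<dots> (chom A a a')\<^sup>o"
    by (rule hle_conv[OF hleI[OF obj(3,2) comp_in[OF obj(3,1,2) in_adj(4,1)]]]) (use adj' x a a' A in auto)
  finally have le_conv_A: "hle ?a ?a' ?h (chom A a a')\<^sup>o" .
  show ?thesis
    using hle_meetI[OF le_A le_conv_A] chom_symz[of a A a'] a a' by (simp add: hleD)
qed

lemma sym_ladj_dsym_iff:
  assumes X: "qcategory Q X" and A: "qcategory Q A" and adj: "is_adj Q X A \<Psi> R"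
  shows "sym_ladj Q (symz Q X) (symz Q A) (dsym Q X A \<Psi>) \<longleftrightarrow>
    (\<forall>x\<in>cob X. \<forall>x'\<in>cob X. chom (symz Q X) x' x \<preceq>
        jn (cty X x) (cty X x') ((\<lambda>a. (dsym Q X A \<Psi> a x')\<^sup>o \<odot> dsym Q X A \<Psi> a x) ` cob A))"
proof -
  let ?S = "dsym Q X A \<Psi>"
  let ?D = "dual Q (symz Q X) (symz Q A) ?S"
  have dist_S: "distributor Q (symz Q X) (symz Q A) ?S"
    by (rule distributor_dsym[OF X A adj])
  have dist_D: "distributor Q (symz Q A) (symz Q X) ?D"
    by (rule distributor_dual_symz[OF X A dist_S])
  have counit: "\<forall>x\<in>cob (symz Q X). \<forall>y\<in>cob (symz Q A). \<forall>y'\<in>cob (symz Q A).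
      ?S y' x \<odot> ?D x y \<preceq> chom (symz Q A) y' y"
    using dsym_counit[OF X A adj] by (simp add: dual_def)
  have unit_term: "jn (cty X x) (cty X x') ((\<lambda>y. ?D x' y \<odot> ?S y x) ` cob (symz Q A)) =
      jn (cty X x) (cty X x') ((\<lambda>a. (?S a x')\<^sup>o \<odot> ?S a x) ` cob A)" if "x' \<in> cob X" for x x'
    using that by (simp add: dual_def)
  show ?thesis
    unfolding sym_ladj_def is_adj_iff[OF qcategory_symz[OF X] qcategory_symz[OF A]]
    using dist_S dist_D counit unit_term by simp
qed

lemma sym_ladj_dsym_iff_diagonal:
  assumes X: "qcategory Q X" and A: "qcategory Q A" and adj: "is_adj Q X A \<Psi> R"
  shows "sym_ladj Q (symz Q X) (symz Q A) (dsym Q X A \<Psi>) \<longleftrightarrow>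
    (\<forall>x\<in>cob X. idm (cty X x) \<preceq>
        jn (cty X x) (cty X x) ((\<lambda>a. (dsym Q X A \<Psi> a x)\<^sup>o \<odot> dsym Q X A \<Psi> a x) ` cob A))"
    (is "_ \<longleftrightarrow> (\<forall>x\<in>cob X. idm (cty X x) \<preceq> ?U x)")
proof -
  let ?S = "dsym Q X A \<Psi>"
  let ?J = "\<lambda>x' x. jn (cty X x) (cty X x') ((\<lambda>a. (?S a x')\<^sup>o \<odot> ?S a x) ` cob A)"
  have J_sub: "(\<lambda>a. (?S a x')\<^sup>o \<odot> ?S a x) ` cob A \<subseteq> hom (cty X x) (cty X x')"
    if "x \<in> cob X" "x' \<in> cob X" for x x'
    by (rule image_comp_in[where T = "cty A"]) (use X A that dsym_in[OF X A adj] in auto)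
  have "(\<forall>x\<in>cob X. \<forall>x'\<in>cob X. chom (symz Q X) x' x \<preceq> ?J x' x) \<longleftrightarrow>
      (\<forall>x\<in>cob X. idm (cty X x) \<preceq> ?U x)"
  proof (intro iffI ballI)
    fix x assume all: "\<forall>x\<in>cob X. \<forall>x'\<in>cob X. chom (symz Q X) x' x \<preceq> ?J x' x" and x: "x \<in> cob X"
    have "idm (cty X x) \<preceq> chom (symz Q X) x x"
      using cat_id_le[OF qcategory_symz[OF X], of x] x by simp
    then show "idm (cty X x) \<preceq> ?U x"
      using le_trans[of "cty X x" "cty X x" "idm (cty X x)" "chom (symz Q X) x x" "?U x"] all J_sub X x
      by simp
  next
    fix x x' assume diag: "\<forall>x\<in>cob X. idm (cty X x) \<preceq> ?U x" and x: "x \<in> cob X" and x': "x' \<in> cob X"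
    show "chom (symz Q X) x' x \<preceq> ?J x' x"
    proof (rule le_join_via_unit_left[where T = "cty A" and f = "\<lambda>a. ?S a x'"])
      show "idm (cty X x') \<preceq> ?U x'"
        using diag x' by blast
      fix a assume a: "a \<in> cob A"
      show "?S a x' \<odot> chom (symz Q X) x' x \<preceq> ?S a x"
        using distributor_right_le[OF distributor_dsym[OF X A adj], of x' x a] x x' a by simp
    qed (use X A x x' dsym_in[OF X A adj] in auto)
  qed
  then show ?thesis
    unfolding sym_ladj_dsym_iff[OF X A adj] .
qed

subsection \<open>Presheaves as distributors out of one-object categories\<close>

definition one_point :: "('x, 'o, 'm) qcat \<Rightarrow> 'x \<Rightarrow> 'o \<Rightarrow> bool" where
  "one_point D d X \<longleftrightarrow> cob D = {d} \<and> cty D d = X \<and> chom D d d = idm X"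

lemma qcategory_one_point: "\<lbrakk>X \<in> obj; one_point D d X\<rbrakk> \<Longrightarrow> qcategory Q D"
  unfolding one_point_def qcategory_def by simp

lemma one_point_star: "one_point (star Q X) () X"
  unfolding one_point_def star_def by simp

lemma star_simps [simp]: "cob (star Q X) = {()}" "cty (star Q X) u = X" "chom (star Q X) u v = idm X"
  by (simp_all add: star_def)

lemma qcategory_star: "X \<in> obj \<Longrightarrow> qcategory Q (star Q X)"
  by (rule qcategory_one_point[OF _ one_point_star])

lemma symz_star:
  assumes X: "X \<in> obj"
  shows "symz Q (star Q X) = star Q X"
proof -
  have "hle X X (idm X) (mt X X (idm X) (idm X))"
    by (rule hle_meetI) (use X in \<open>simp_all add: hleI\<close>)
  then have "mt X X (idm X) (idm X)\<^sup>o = idm X"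
    using hle_antisym[OF hle_meet1[of X X "idm X"]] X by simp
  then show ?thesis
    unfolding symz_def star_def by simp
qed

lemma is_adj_one_point_iff:
  assumes X: "X \<in> obj" and D: "one_point D d X" and A: "qcategory Q A"
  shows "is_adj Q D A \<Phi> \<Psi> \<longleftrightarrow>
    (\<forall>a\<in>cob A. \<Phi> a d \<in> hom X (cty A a)) \<and> (\<forall>a\<in>cob A. \<Psi> d a \<in> hom (cty A a) X) \<and>
    (\<forall>a\<in>cob A. \<forall>a'\<in>cob A. chom A a' a \<odot> \<Phi> a d \<preceq> \<Phi> a' d) \<and>
    (\<forall>a\<in>cob A. \<forall>a'\<in>cob A. \<Psi> d a \<odot> chom A a a' \<preceq> \<Psi> d a') \<and>
    (\<forall>a x. \<not> (a \<in> cob A \<and> x = d) \<longrightarrow> \<Phi> a x = undefined) \<and>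
    (\<forall>x a. \<not> (x = d \<and> a \<in> cob A) \<longrightarrow> \<Psi> x a = undefined) \<and>
    idm X \<preceq> jn X X ((\<lambda>a. \<Psi> d a \<odot> \<Phi> a d) ` cob A) \<and>
    (\<forall>a\<in>cob A. \<forall>b\<in>cob A. \<Phi> b d \<odot> \<Psi> d a \<preceq> chom A b a)"
proof -
  have D': "cob D = {d}" "cty D d = X" "chom D d d = idm X"
    using D unfolding one_point_def by auto
  have "distributor Q D A \<Phi> \<longleftrightarrow> (\<forall>a\<in>cob A. \<Phi> a d \<in> hom X (cty A a)) \<and>
      (\<forall>a\<in>cob A. \<forall>a'\<in>cob A. chom A a' a \<odot> \<Phi> a d \<preceq> \<Phi> a' d) \<and>
      (\<forall>a x. \<not> (a \<in> cob A \<and> x = d) \<longrightarrow> \<Phi> a x = undefined)"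
    unfolding distributor_def D' using X A by (auto simp: D') (metis A X cat_ty comp_id le_refl)
  moreover have "distributor Q A D \<Psi> \<longleftrightarrow> (\<forall>a\<in>cob A. \<Psi> d a \<in> hom (cty A a) X) \<and>
      (\<forall>a\<in>cob A. \<forall>a'\<in>cob A. \<Psi> d a \<odot> chom A a a' \<preceq> \<Psi> d a') \<and>
      (\<forall>x a. \<not> (x = d \<and> a \<in> cob A) \<longrightarrow> \<Psi> x a = undefined)"
    unfolding distributor_def D' using X A by (auto simp: D') (metis A X cat_ty id_comp le_refl)
  ultimately show ?thesis
    unfolding is_adj_iff[OF qcategory_one_point[OF X D] A] D' using D'(2,3) by auto
qed

lemma sym_ladj_dsym_one_point_iff:
  assumes X: "X \<in> obj" and D: "one_point D d X" and A: "qcategory Q A" and adj: "is_adj Q D A \<Phi> \<Psi>"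
  shows "sym_ladj Q (symz Q D) (symz Q A) (dsym Q D A \<Phi>) \<longleftrightarrow>
    idm X \<preceq> jn X X ((\<lambda>a. (dsym Q D A \<Phi> a d)\<^sup>o \<odot> dsym Q D A \<Phi> a d) ` cob A)"
  using sym_ladj_dsym_iff_diagonal[OF qcategory_one_point[OF X D] A adj] D
  by (simp add: one_point_def)

lemma sym_ladj_dsym_star_iff:
  assumes X: "X \<in> obj" and A: "qcategory Q A" and adj: "is_adj Q (star Q X) A \<psi> \<rho>"
  shows "sym_ladj Q (star Q X) (symz Q A) (dsym Q (star Q X) A \<psi>) \<longleftrightarrow>
    idm X \<preceq> jn X X ((\<lambda>a. (dsym Q (star Q X) A \<psi> a ())\<^sup>o \<odot> dsym Q (star Q X) A \<psi> a ()) ` cob A)"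
  using sym_ladj_dsym_one_point_iff[OF X one_point_star A adj] symz_star[OF X] by simp

lemma is_adj_starD:
  assumes X: "X \<in> obj" and A: "qcategory Q A" and adj: "is_adj Q (star Q X) A \<psi> \<rho>"
  shows is_adj_star_in: "a \<in> cob A \<Longrightarrow> \<psi> a () \<in> hom X (cty A a)"
    and is_adj_star_radj_in: "a \<in> cob A \<Longrightarrow> \<rho> () a \<in> hom (cty A a) X"
    and is_adj_star_act: "\<lbrakk>a \<in> cob A; a' \<in> cob A\<rbrakk> \<Longrightarrow> chom A a' a \<odot> \<psi> a () \<preceq> \<psi> a' ()"
    and is_adj_star_radj_act: "\<lbrakk>a \<in> cob A; a' \<in> cob A\<rbrakk> \<Longrightarrow> \<rho> () a \<odot> chom A a a' \<preceq> \<rho> () a'"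
    and is_adj_star_undefined: "a \<notin> cob A \<Longrightarrow> \<psi> a u = undefined"
    and is_adj_star_counit: "\<lbrakk>a \<in> cob A; b \<in> cob A\<rbrakk> \<Longrightarrow> \<psi> b () \<odot> \<rho> () a \<preceq> chom A b a"
  using adj unfolding is_adj_one_point_iff[OF X one_point_star A] by auto

lemma hle_dsym_star:
  assumes X: "X \<in> obj" and A: "qcategory Q A" and adj: "is_adj Q (star Q X) A \<psi> \<rho>" and a: "a \<in> cob A"
  shows "hle X (cty A a) (dsym Q (star Q X) A \<psi> a ()) (\<psi> a ())"
    and "hle X (cty A a) (dsym Q (star Q X) A \<psi> a ()) (\<rho> () a)\<^sup>o"
    and "hle (cty A a) X (dsym Q (star Q X) A \<psi> a ())\<^sup>o (\<rho> () a)"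
  using hle_dsym[OF qcategory_star[OF X] A adj _ a] by simp_all

lemma is_adj_column:
  assumes XX: "qcategory Q XX" and A: "qcategory Q A" and adj: "is_adj Q XX A \<Psi> R" and x: "x \<in> cob XX"
  shows "is_adj Q (star Q (cty XX x)) A
    (\<lambda>a u. if a \<in> cob A then \<Psi> a x else undefined) (\<lambda>u a. if a \<in> cob A then R x a else undefined)"
proof -
  let ?X = "cty XX x"
  note adj' = adj[unfolded is_adj_iff[OF XX A]]
  have J_sub: "(\<lambda>a. R x a \<odot> \<Psi> a x) ` cob A \<subseteq> hom ?X ?X"
    by (rule image_comp_in[where T = "cty A"]) (use adj' x A XX in auto)
  have "hle ?X ?X (idm ?X) (chom XX x x)"
    by (rule hle_cat_id[OF XX x])
  also have "hle ?X ?X \<dots> (jn ?X ?X ((\<lambda>a. R x a \<odot> \<Psi> a x) ` cob A))"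
    using adj' x XX J_sub by (intro hleI) auto
  finally have unit: "idm ?X \<preceq> jn ?X ?X ((\<lambda>a. R x a \<odot> \<Psi> a x) ` cob A)"
    by (rule hleD)
  show ?thesis
    unfolding is_adj_one_point_iff[OF cat_ty[OF XX x] one_point_star A]
    using adj' x unit by (auto simp: distributor_left_le distributor_right_le)
qed

lemma sym_ladj_dsym_of_presheaves:
  assumes A: "qcategory Q A"
    and presheaves: "\<forall>X\<in>obj. \<forall>\<psi>. ladj Q (star Q X) A \<psi> \<longrightarrow>
      sym_ladj Q (star Q X) (symz Q A) (dsym Q (star Q X) A \<psi>)"
    and XX: "qcategory Q XX" and L: "ladj Q XX A \<Psi>"
  shows "sym_ladj Q (symz Q XX) (symz Q A) (dsym Q XX A \<Psi>)"
proof -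
  define R where "R = radj Q XX A \<Psi>"
  have adj: "is_adj Q XX A \<Psi> R"
    unfolding R_def by (rule is_adj_radj[OF XX A L])
  show ?thesis
    unfolding sym_ladj_dsym_iff_diagonal[OF XX A adj]
  proof
    fix x assume x: "x \<in> cob XX"
    let ?X = "cty XX x"
    let ?\<psi> = "\<lambda>a u. if a \<in> cob A then \<Psi> a x else undefined"
    have adj_x: "is_adj Q (star Q ?X) A ?\<psi> (\<lambda>u a. if a \<in> cob A then R x a else undefined)"
      by (rule is_adj_column[OF XX A adj x])
    then have "ladj Q (star Q ?X) A ?\<psi>"
      unfolding ladj_def by blast
    then have "sym_ladj Q (star Q ?X) (symz Q A) (dsym Q (star Q ?X) A ?\<psi>)"
      using presheaves cat_ty[OF XX x] by blast
    moreover have "dsym Q (star Q ?X) A ?\<psi> a () = dsym Q XX A \<Psi> a x" if "a \<in> cob A" for a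
      using dsym_eq[OF qcategory_star[OF cat_ty[OF XX x]] A adj_x _ that] dsym_eq[OF XX A adj x that] that
      by simp
    ultimately show "idm ?X \<preceq> jn ?X ?X ((\<lambda>a. (dsym Q XX A \<Psi> a x)\<^sup>o \<odot> dsym Q XX A \<Psi> a x) ` cob A)"
      unfolding sym_ladj_dsym_star_iff[OF cat_ty[OF XX x] A adj_x] by simp
  qed
qed

text \<open>A presheaf on \<open>*\<^sub>X\<close> is transported to a distributor out of a one-object category
  whose object has type \<open>'x\<close>, where the hypothesis can be applied.\<close>

lemma sym_ladj_dsym_star_of_distributors:
  assumes A: "qcategory Q A"
    and distributors: "\<forall>XX :: ('x, 'o, 'm) qcat. qcategory Q XX \<longrightarrow>
      (\<forall>\<Psi>. ladj Q XX A \<Psi> \<longrightarrow> sym_ladj Q (symz Q XX) (symz Q A) (dsym Q XX A \<Psi>))"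
    and X: "X \<in> obj" and L: "ladj Q (star Q X) A \<psi>"
  shows "sym_ladj Q (star Q X) (symz Q A) (dsym Q (star Q X) A \<psi>)"
proof -
  define \<rho> where "\<rho> = radj Q (star Q X) A \<psi>"
  have adj: "is_adj Q (star Q X) A \<psi> \<rho>"
    unfolding \<rho>_def by (rule is_adj_radj[OF qcategory_star[OF X] A L])
  define D :: "('x, 'o, 'm) qcat" where "D = \<lparr>cob = {undefined}, cty = (\<lambda>_. X), chom = (\<lambda>_ _. idm X)\<rparr>"
  have D: "one_point D undefined X"
    unfolding one_point_def D_def by simp
  define \<Psi> where "\<Psi> = (\<lambda>a (d :: 'x). if a \<in> cob A \<and> d = undefined then \<psi> a () else undefined)"
  define R where "R = (\<lambda>(d :: 'x) a. if d = undefined \<and> a \<in> cob A then \<rho> () a else undefined)"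
  have adj_D: "is_adj Q D A \<Psi> R"
    using adj unfolding is_adj_one_point_iff[OF X D A] is_adj_one_point_iff[OF X one_point_star A]
    by (auto simp: R_def \<Psi>_def)
  have "sym_ladj Q (symz Q D) (symz Q A) (dsym Q D A \<Psi>)"
    using distributors qcategory_one_point[OF X D] adj_D unfolding ladj_def by blast
  moreover have "dsym Q D A \<Psi> a undefined = dsym Q (star Q X) A \<psi> a ()" if "a \<in> cob A" for a
    using dsym_eq[OF qcategory_one_point[OF X D] A adj_D _ that] dsym_eq[OF qcategory_star[OF X] A adj _ that]
      that D
    by (simp add: one_point_def R_def \<Psi>_def)
  ultimately show ?thesis
    unfolding sym_ladj_dsym_star_iff[OF X A adj] sym_ladj_dsym_one_point_iff[OF X D A adj_D] by simp
qed

subsection \<open>The functor \<open>L\<^sub>\<bbbA>\<close>\<close>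

lemma sym_ladj_star_symzD:
  assumes X: "X \<in> obj" and A: "qcategory Q A" and S: "sym_ladj Q (star Q X) (symz Q A) \<phi>"
  shows sym_ladj_star_in: "a \<in> cob A \<Longrightarrow> \<phi> a () \<in> hom X (cty A a)"
    and sym_ladj_star_act: "\<lbrakk>a \<in> cob A; a' \<in> cob A\<rbrakk> \<Longrightarrow> chom (symz Q A) a' a \<odot> \<phi> a () \<preceq> \<phi> a' ()"
    and sym_ladj_star_undefined: "a \<notin> cob A \<Longrightarrow> \<phi> a u = undefined"
    and sym_ladj_star_unit: "idm X \<preceq> jn X X ((\<lambda>a. (\<phi> a ())\<^sup>o \<odot> \<phi> a ()) ` cob A)"
    and sym_ladj_star_counit:
      "\<lbrakk>a \<in> cob A; b \<in> cob A\<rbrakk> \<Longrightarrow> \<phi> b () \<odot> (\<phi> a ())\<^sup>o \<preceq> chom (symz Q A) b a"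
proof -
  note S' = S[unfolded sym_ladj_def is_adj_one_point_iff[OF X one_point_star qcategory_symz[OF A]]]
  have "(\<lambda>a. dual Q (star Q X) (symz Q A) \<phi> () a \<odot> \<phi> a ()) ` cob (symz Q A) =
      (\<lambda>a. (\<phi> a ())\<^sup>o \<odot> \<phi> a ()) ` cob A"
    by (auto simp: dual_def)
  then show "idm X \<preceq> jn X X ((\<lambda>a. (\<phi> a ())\<^sup>o \<odot> \<phi> a ()) ` cob A)"
    using S' by simp
  show "a \<in> cob A \<Longrightarrow> \<phi> a () \<in> hom X (cty A a)"
    and "\<lbrakk>a \<in> cob A; a' \<in> cob A\<rbrakk> \<Longrightarrow> chom (symz Q A) a' a \<odot> \<phi> a () \<preceq> \<phi> a' ()"
    and "a \<notin> cob A \<Longrightarrow> \<phi> a u = undefined"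
    using S' by auto
  show "\<lbrakk>a \<in> cob A; b \<in> cob A\<rbrakk> \<Longrightarrow> \<phi> b () \<odot> (\<phi> a ())\<^sup>o \<preceq> chom (symz Q A) b a"
    using S' by (auto simp: dual_def)
qed

text \<open>\<open>lift A X \<phi>\<close> is the presheaf \<open>\<bbbA>(-, S\<^sub>\<bbbA>-) \<otimes> \<phi>\<close> and \<open>lift_radj A X \<phi>\<close> the presheaf
  \<open>\<phi>\<^sup>o \<otimes> \<bbbA>(S\<^sub>\<bbbA>-, -)\<close>, which turns out to be its right adjoint.\<close>

definition lift :: "('a, 'o, 'm) qcat \<Rightarrow> 'o \<Rightarrow> ('a \<Rightarrow> unit \<Rightarrow> 'm) \<Rightarrow> ('a \<Rightarrow> unit \<Rightarrow> 'm)" where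
  "lift A X \<phi> = (\<lambda>a u. if a \<in> cob A
     then jn X (cty A a) ((\<lambda>b. chom A a b \<odot> \<phi> b ()) ` cob A) else undefined)"

definition lift_radj :: "('a, 'o, 'm) qcat \<Rightarrow> 'o \<Rightarrow> ('a \<Rightarrow> unit \<Rightarrow> 'm) \<Rightarrow> (unit \<Rightarrow> 'a \<Rightarrow> 'm)" where
  "lift_radj A X \<phi> = (\<lambda>u a. if a \<in> cob A
     then jn (cty A a) X ((\<lambda>c. (\<phi> c ())\<^sup>o \<odot> chom A c a) ` cob A) else undefined)"

lemma Lfun_eq: "Lfun Q A (X, \<phi>) = (X, lift A X \<phi>)"
  unfolding Lfun_def lift_def dcomp_def star_def by (auto intro!: ext)

context
  fixes A :: "('a, 'o, 'm) qcat" and X :: 'o and \<phi> :: "'a \<Rightarrow> unit \<Rightarrow> 'm"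
  assumes X: "X \<in> obj" and A: "qcategory Q A" and S: "sym_ladj Q (star Q X) (symz Q A) \<phi>"
begin

lemma phi_in: "a \<in> cob A \<Longrightarrow> \<phi> a () \<in> hom X (cty A a)"
  by (rule sym_ladj_star_in[OF X A S])

lemma phi_conv_in: "a \<in> cob A \<Longrightarrow> (\<phi> a ())\<^sup>o \<in> hom (cty A a) X"
  using phi_in X A by simp

lemma lift_terms_in: "a \<in> cob A \<Longrightarrow> (\<lambda>b. chom A a b \<odot> \<phi> b ()) ` cob A \<subseteq> hom X (cty A a)"
  by (rule image_comp_in[where T = "cty A"]) (use X A phi_in in auto)

lemma lift_radj_terms_in: "a \<in> cob A \<Longrightarrow> (\<lambda>c. (\<phi> c ())\<^sup>o \<odot> chom A c a) ` cob A \<subseteq> hom (cty A a) X"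
  by (rule image_comp_in[where T = "cty A"]) (use X A phi_conv_in in auto)

lemma lift_eq: "a \<in> cob A \<Longrightarrow> lift A X \<phi> a u = jn X (cty A a) ((\<lambda>b. chom A a b \<odot> \<phi> b ()) ` cob A)"
  by (simp add: lift_def)

lemma lift_radj_eq:
  "a \<in> cob A \<Longrightarrow> lift_radj A X \<phi> u a = jn (cty A a) X ((\<lambda>c. (\<phi> c ())\<^sup>o \<odot> chom A c a) ` cob A)"
  by (simp add: lift_radj_def)

lemma lift_in: "a \<in> cob A \<Longrightarrow> lift A X \<phi> a u \<in> hom X (cty A a)"
  using lift_eq lift_terms_in X A by simp

lemma lift_radj_in: "a \<in> cob A \<Longrightarrow> lift_radj A X \<phi> u a \<in> hom (cty A a) X"
  using lift_radj_eq lift_radj_terms_in X A by simp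

lemma hle_lift:
  assumes a: "a \<in> cob A"
  shows "hle X (cty A a) (\<phi> a ()) (lift A X \<phi> a ())"
proof -
  have "\<phi> a () = idm (cty A a) \<odot> \<phi> a ()"
    using phi_in[OF a] X A a by simp
  also have "hle X (cty A a) \<dots> (chom A a a \<odot> \<phi> a ())"
    by (rule hle_comp_left[OF hle_cat_id[OF A a] X phi_in[OF a]])
  also have "hle X (cty A a) \<dots> (lift A X \<phi> a ())"
    unfolding lift_eq[OF a] by (rule hle_join_upper[OF X _ lift_terms_in[OF a]]) (use A a in auto)
  finally show ?thesis .
qed

lemma hle_conv_lift_radj:
  assumes a: "a \<in> cob A"
  shows "hle (cty A a) X (\<phi> a ())\<^sup>o (lift_radj A X \<phi> () a)"
proof -
  have "(\<phi> a ())\<^sup>o = (\<phi> a ())\<^sup>o \<odot> idm (cty A a)"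
    using phi_conv_in[OF a] X A a by simp
  also have "hle (cty A a) X \<dots> ((\<phi> a ())\<^sup>o \<odot> chom A a a)"
    by (rule hle_comp_right[OF hle_cat_id[OF A a] X phi_conv_in[OF a]])
  also have "hle (cty A a) X \<dots> (lift_radj A X \<phi> () a)"
    unfolding lift_radj_eq[OF a] by (rule hle_join_upper[OF _ X lift_radj_terms_in[OF a]]) (use A a in auto)
  finally show ?thesis .
qed

lemma lift_comp_conv_le:
  assumes b: "b \<in> cob A" and c: "c \<in> cob A"
  shows "lift A X \<phi> b () \<odot> (\<phi> c ())\<^sup>o \<preceq> chom A b c"
  unfolding lift_eq[OF b]
proof (rule join_comp_le[OF _ X _ phi_conv_in[OF c] lift_terms_in[OF b]])
  fix s assume "s \<in> (\<lambda>d. chom A b d \<odot> \<phi> d ()) ` cob A"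
  then obtain d where d: "d \<in> cob A" and s: "s = chom A b d \<odot> \<phi> d ()"
    by auto
  have obj: "cty A b \<in> obj" "cty A c \<in> obj" "cty A d \<in> obj"
    using A b c d by auto
  have "s \<odot> (\<phi> c ())\<^sup>o = chom A b d \<odot> (\<phi> d () \<odot> (\<phi> c ())\<^sup>o)"
    using s comp_assoc[OF obj(2) X obj(3,1) phi_conv_in[OF c] phi_in[OF d]] A b d by simp
  also have "hle (cty A c) (cty A b) \<dots> (chom A b d \<odot> chom (symz Q A) d c)"
    using sym_ladj_star_counit[OF X A S c d] obj A b c d phi_in phi_conv_in
    by (intro hle_comp_right[OF hleI]) (auto intro: comp_in[OF obj(2) X obj(3)])
  also have "hle (cty A c) (cty A b) \<dots> (chom A b d \<odot> chom A d c)"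
    by (rule hle_comp_right[OF hle_symz_chom[OF A c d]]) (use A b d in simp_all)
  also have "hle (cty A c) (cty A b) \<dots> (chom A b c)"
    by (rule hle_cat_comp[OF A c d b])
  finally show "s \<odot> (\<phi> c ())\<^sup>o \<preceq> chom A b c"
    by (rule hleD)
qed (use A b c in simp_all)

lemma lift_act:
  assumes a: "a \<in> cob A" and a': "a' \<in> cob A"
  shows "chom A a' a \<odot> lift A X \<phi> a () \<preceq> lift A X \<phi> a' ()"
  unfolding lift_eq[OF a] lift_eq[OF a']
proof (rule comp_join_le[OF X cat_ty[OF A a] cat_ty[OF A a'] cat_hom_in[OF A a a'] lift_terms_in[OF a]])
  fix s assume "s \<in> (\<lambda>b. chom A a b \<odot> \<phi> b ()) ` cob A"
  then obtain b where b: "b \<in> cob A" and s: "s = chom A a b \<odot> \<phi> b ()"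
    by auto
  have obj: "cty A a \<in> obj" "cty A a' \<in> obj" "cty A b \<in> obj"
    using A a a' b by auto
  have "chom A a' a \<odot> s = (chom A a' a \<odot> chom A a b) \<odot> \<phi> b ()"
    using s comp_assoc[OF X obj(3,1,2) phi_in[OF b]] A a a' b by simp
  also have "hle X (cty A a') \<dots> (chom A a' b \<odot> \<phi> b ())"
    by (rule hle_comp_left[OF hle_cat_comp[OF A b a a'] X phi_in[OF b]])
  also have "hle X (cty A a') \<dots> (jn X (cty A a') ((\<lambda>b. chom A a' b \<odot> \<phi> b ()) ` cob A))"
    by (rule hle_join_upper[OF X obj(2) lift_terms_in[OF a']]) (use b in auto)
  finally show "chom A a' a \<odot> s \<preceq> jn X (cty A a') ((\<lambda>b. chom A a' b \<odot> \<phi> b ()) ` cob A)"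
    by (rule hleD)
qed (use A a' lift_terms_in[OF a'] X in simp)

lemma lift_radj_act:
  assumes a: "a \<in> cob A" and a': "a' \<in> cob A"
  shows "lift_radj A X \<phi> () a \<odot> chom A a a' \<preceq> lift_radj A X \<phi> () a'"
  unfolding lift_radj_eq[OF a] lift_radj_eq[OF a']
proof (rule join_comp_le[OF cat_ty[OF A a'] cat_ty[OF A a] X cat_hom_in[OF A a' a] lift_radj_terms_in[OF a]])
  fix s assume "s \<in> (\<lambda>c. (\<phi> c ())\<^sup>o \<odot> chom A c a) ` cob A"
  then obtain c where c: "c \<in> cob A" and s: "s = (\<phi> c ())\<^sup>o \<odot> chom A c a"
    by auto
  have obj: "cty A a \<in> obj" "cty A a' \<in> obj" "cty A c \<in> obj"
    using A a a' c by auto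
  have "s \<odot> chom A a a' = (\<phi> c ())\<^sup>o \<odot> (chom A c a \<odot> chom A a a')"
    using s comp_assoc[OF obj(2,1,3) X _ _ phi_conv_in[OF c]] A a a' c by simp
  also have "hle (cty A a') X \<dots> ((\<phi> c ())\<^sup>o \<odot> chom A c a')"
    by (rule hle_comp_right[OF hle_cat_comp[OF A a' a c] X phi_conv_in[OF c]])
  also have "hle (cty A a') X \<dots> (jn (cty A a') X ((\<lambda>c. (\<phi> c ())\<^sup>o \<odot> chom A c a') ` cob A))"
    by (rule hle_join_upper[OF obj(2) X lift_radj_terms_in[OF a']]) (use c in auto)
  finally show "s \<odot> chom A a a' \<preceq> jn (cty A a') X ((\<lambda>c. (\<phi> c ())\<^sup>o \<odot> chom A c a') ` cob A)"
    by (rule hleD)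
qed (use A a' lift_radj_terms_in[OF a'] X in simp)

lemma lift_counit:
  assumes a: "a \<in> cob A" and b: "b \<in> cob A"
  shows "lift A X \<phi> b () \<odot> lift_radj A X \<phi> () a \<preceq> chom A b a"
  unfolding lift_radj_eq[OF a]
proof (rule comp_join_le[OF cat_ty[OF A a] X cat_ty[OF A b] lift_in[OF b] lift_radj_terms_in[OF a]])
  fix s assume "s \<in> (\<lambda>c. (\<phi> c ())\<^sup>o \<odot> chom A c a) ` cob A"
  then obtain c where c: "c \<in> cob A" and s: "s = (\<phi> c ())\<^sup>o \<odot> chom A c a"
    by auto
  have obj: "cty A a \<in> obj" "cty A b \<in> obj" "cty A c \<in> obj"
    using A a b c by auto
  have "lift A X \<phi> b () \<odot> s = (lift A X \<phi> b () \<odot> (\<phi> c ())\<^sup>o) \<odot> chom A c a"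
    using s comp_assoc[OF obj(1,3) X obj(2) _ phi_conv_in[OF c] lift_in[OF b]] A a c by simp
  also have "hle (cty A a) (cty A b) \<dots> (chom A b c \<odot> chom A c a)"
    using lift_comp_conv_le[OF b c] A a b c phi_conv_in[OF c] lift_in[OF b]
    by (intro hle_comp_left[OF hleI]) (auto intro: comp_in[OF obj(3) X obj(2)])
  also have "hle (cty A a) (cty A b) \<dots> (chom A b a)"
    by (rule hle_cat_comp[OF A a c b])
  finally show "lift A X \<phi> b () \<odot> s \<preceq> chom A b a"
    by (rule hleD)
qed (use A a b in simp_all)

lemma lift_unit: "idm X \<preceq> jn X X ((\<lambda>a. lift_radj A X \<phi> () a \<odot> lift A X \<phi> a ()) ` cob A)"
proof -
  have sub: "(\<lambda>a. (\<phi> a ())\<^sup>o \<odot> \<phi> a ()) ` cob A \<subseteq> hom X X"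
    "(\<lambda>a. lift_radj A X \<phi> () a \<odot> lift A X \<phi> a ()) ` cob A \<subseteq> hom X X"
    by (rule image_comp_in[where T = "cty A"]; use X A phi_in phi_conv_in lift_in lift_radj_in in simp)+
  have "hle X X (idm X) (jn X X ((\<lambda>a. (\<phi> a ())\<^sup>o \<odot> \<phi> a ()) ` cob A))"
    by (rule hleI) (use X sub sym_ladj_star_unit[OF X A S] in simp_all)
  also have "hle X X \<dots> (jn X X ((\<lambda>a. lift_radj A X \<phi> () a \<odot> lift A X \<phi> a ()) ` cob A))"
  proof (rule hle_join_mono[OF X X sub])
    fix s assume "s \<in> (\<lambda>a. (\<phi> a ())\<^sup>o \<odot> \<phi> a ()) ` cob A"
    then obtain a where a: "a \<in> cob A" and s: "s = (\<phi> a ())\<^sup>o \<odot> \<phi> a ()"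
      by auto
    then show "\<exists>t\<in>(\<lambda>a. lift_radj A X \<phi> () a \<odot> lift A X \<phi> a ()) ` cob A. s \<preceq> t"
      using hleD(1)[OF hle_comp[OF hle_conv_lift_radj[OF a] hle_lift[OF a]]] by blast
  qed
  finally show ?thesis
    by (rule hleD)
qed

lemma is_adj_lift: "is_adj Q (star Q X) A (lift A X \<phi>) (lift_radj A X \<phi>)"
  unfolding is_adj_one_point_iff[OF X one_point_star A]
  using lift_in lift_radj_in lift_act lift_radj_act lift_unit lift_counit
  by (auto simp: lift_def lift_radj_def)

lemma lift_meet_comp_conv_le:
  assumes a: "a \<in> cob A" and c: "c \<in> cob A"
  shows "mt X (cty A a) (lift A X \<phi> a ()) (lift_radj A X \<phi> () a)\<^sup>o \<odot> (\<phi> c ())\<^sup>o \<preceq> chom (symz Q A) a c"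
    (is "?m \<odot> _ \<preceq> _")
proof -
  have obj: "cty A a \<in> obj" "cty A c \<in> obj"
    using A a c by auto
  have le_chom: "hle (cty A c) (cty A a) (?m \<odot> (\<phi> c ())\<^sup>o) (chom A a c)"
    using hle_trans[OF hle_comp_left[OF hle_meet1[OF X obj(1) lift_in[OF a]] obj(2) phi_conv_in[OF c]]
      hleI[OF obj(2,1) comp_in[OF obj(2) X obj(1) phi_conv_in[OF c] lift_in[OF a]]
        cat_hom_in[OF A c a] lift_comp_conv_le[OF a c]]] .
  have "hle (cty A c) (cty A a) (?m \<odot> (\<phi> c ())\<^sup>o) ((lift_radj A X \<phi> () a)\<^sup>o \<odot> (\<phi> c ())\<^sup>o)"
    by (rule hle_comp_left[OF hle_meet2[OF X obj(1)] obj(2) phi_conv_in[OF c]])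
      (use lift_radj_in[OF a] X obj in simp)
  also have "(lift_radj A X \<phi> () a)\<^sup>o \<odot> (\<phi> c ())\<^sup>o = (\<phi> c () \<odot> lift_radj A X \<phi> () a)\<^sup>o"
    using conv_comp[OF obj(1) X obj(2) lift_radj_in[OF a] phi_in[OF c]] by simp
  also have "hle (cty A c) (cty A a) \<dots> (lift A X \<phi> c () \<odot> lift_radj A X \<phi> () a)\<^sup>o"
    by (rule hle_conv[OF hle_comp_left[OF hle_lift[OF c] obj(1) lift_radj_in[OF a]]])
  also have "hle (cty A c) (cty A a) \<dots> (chom A c a)\<^sup>o"
    by (rule hle_conv[OF hleI[OF obj comp_in[OF obj(1) X obj(2) lift_radj_in[OF a] lift_in[OF c]]
      _ lift_counit[OF a c]]])
      (use A a c in simp)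
  finally have le_conv_chom: "hle (cty A c) (cty A a) (?m \<odot> (\<phi> c ())\<^sup>o) (chom A c a)\<^sup>o" .
  show ?thesis
    using le_symzI[OF A c a] le_chom le_conv_chom by (auto dest: hleD)
qed

lemma lift_meet_eq:
  assumes a: "a \<in> cob A"
  shows "mt X (cty A a) (lift A X \<phi> a ()) (lift_radj A X \<phi> () a)\<^sup>o = \<phi> a ()"
    (is "?m = _")
proof (rule hle_antisym)
  have obj: "cty A a \<in> obj"
    using A a by simp
  let ?J = "jn X (cty A a) ((\<lambda>c. chom (symz Q A) a c \<odot> \<phi> c ()) ` cob A)"
  have J_sub: "(\<lambda>c. chom (symz Q A) a c \<odot> \<phi> c ()) ` cob A \<subseteq> hom X (cty A a)"
    by (rule image_comp_in[where T = "cty A"]) (use X A a phi_in in auto)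
  have "?m \<preceq> ?J"
    by (rule le_join_via_unit_right[where T = "cty A" and g = "\<lambda>c. (\<phi> c ())\<^sup>o"])
      (use X A a phi_in sym_ladj_star_unit[OF X A S] lift_meet_comp_conv_le[OF a] in auto)
  moreover have "?J \<preceq> \<phi> a ()"
    by (rule join_least) (use X obj J_sub a phi_in sym_ladj_star_act[OF X A S] in auto)
  ultimately show "hle X (cty A a) ?m (\<phi> a ())"
    using le_trans[OF X obj meet_in[OF X obj] join_in[OF X obj J_sub] phi_in[OF a]] X obj phi_in[OF a]
    by (auto intro: hleI)
  show "hle X (cty A a) (\<phi> a ()) ?m"
    by (rule hle_meetI[OF hle_lift[OF a]])
      (use hle_conv[OF hle_conv_lift_radj[OF a]] phi_in[OF a] X obj in simp)
qed

lemma dsym_lift: "dsym Q (star Q X) A (lift A X \<phi>) = \<phi>"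
proof (intro ext)
  fix a u
  show "dsym Q (star Q X) A (lift A X \<phi>) a u = \<phi> a u"
  proof (cases "a \<in> cob A")
    case True
    then show ?thesis
      using dsym_eq[OF qcategory_star[OF X] A is_adj_lift _ True] lift_meet_eq[OF True] by simp
  next
    case False
    then show ?thesis
      using sym_ladj_star_undefined[OF X A S False] by (simp add: dsym_def)
  qed
qed

end

context
  fixes A :: "('a, 'o, 'm) qcat" and X :: 'o and \<psi> :: "'a \<Rightarrow> unit \<Rightarrow> 'm" and \<rho> :: "unit \<Rightarrow> 'a \<Rightarrow> 'm"
  assumes X: "X \<in> obj" and A: "qcategory Q A" and adj: "is_adj Q (star Q X) A \<psi> \<rho>"
    and S: "sym_ladj Q (star Q X) (symz Q A) (dsym Q (star Q X) A \<psi>)"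
begin

lemma lift_dsym_le:
  assumes a: "a \<in> cob A"
  shows "lift A X (dsym Q (star Q X) A \<psi>) a u \<preceq> \<psi> a ()"
  unfolding lift_eq[OF X A S a]
proof (rule join_least[OF X cat_ty[OF A a] lift_terms_in[OF X A S a] is_adj_star_in[OF X A adj a]])
  fix t assume "t \<in> (\<lambda>b. chom A a b \<odot> dsym Q (star Q X) A \<psi> b ()) ` cob A"
  then obtain b where b: "b \<in> cob A" and t: "t = chom A a b \<odot> dsym Q (star Q X) A \<psi> b ()"
    by auto
  have "hle X (cty A a) t (chom A a b \<odot> \<psi> b ())"
    unfolding t
      by (rule hle_comp_right[OF hle_dsym_star(1)[OF X A adj b] cat_ty[OF A a] cat_hom_in[OF A b a]])
  also have "hle X (cty A a) \<dots> (\<psi> a ())"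
    using is_adj_star_act[OF X A adj b a] is_adj_star_in[OF X A adj] A a b X
    by (intro hleI) (auto intro: comp_in[of X "cty A b" "cty A a"])
  finally show "t \<preceq> \<psi> a ()"
    by (rule hleD)
qed

lemma le_lift_dsym:
  assumes a: "a \<in> cob A"
  shows "\<psi> a () \<preceq> lift A X (dsym Q (star Q X) A \<psi>) a u"
  unfolding lift_eq[OF X A S a]
proof (rule le_join_via_unit_right[where T = "cty A" and g = "\<lambda>b. (dsym Q (star Q X) A \<psi> b ())\<^sup>o"])
  fix b assume b: "b \<in> cob A"
  have "hle (cty A b) (cty A a) ((\<psi> a ()) \<odot> (dsym Q (star Q X) A \<psi> b ())\<^sup>o) (\<psi> a () \<odot> \<rho> () b)"
    by (rule hle_comp_right[OF hle_dsym_star(3)[OF X A adj b] cat_ty[OF A a] is_adj_star_in[OF X A adj a]])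
  also have "hle (cty A b) (cty A a) \<dots> (chom A a b)"
    using is_adj_star_counit[OF X A adj b a] is_adj_star_in[OF X A adj a]
      is_adj_star_radj_in[OF X A adj b] A a b X
    by (intro hleI) (auto intro: comp_in[of "cty A b" X "cty A a"])
  finally show "\<psi> a () \<odot> (dsym Q (star Q X) A \<psi> b ())\<^sup>o \<preceq> chom A a b"
    by (rule hleD)
qed (use X A a phi_in[OF X A S] is_adj_star_in[OF X A adj] sym_ladj_star_unit[OF X A S] in auto)

lemma lift_dsym: "lift A X (dsym Q (star Q X) A \<psi>) = \<psi>"
proof (intro ext)
  fix a u
  show "lift A X (dsym Q (star Q X) A \<psi>) a u = \<psi> a u"
  proof (cases "a \<in> cob A")
    case True
    then show ?thesis
      using le_antisym[OF X cat_ty[OF A True] lift_in[OF X A S True] is_adj_star_in[OF X A adj True]]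
        lift_dsym_le le_lift_dsym by simp
  next
    case False
    then show ?thesis
      using is_adj_star_undefined[OF X A adj False] by (simp add: lift_def)
  qed
qed

end

context
  fixes A :: "('a, 'o, 'm) qcat" and X X' :: 'o
    and \<psi> \<psi>' :: "'a \<Rightarrow> unit \<Rightarrow> 'm" and \<rho> \<rho>' :: "unit \<Rightarrow> 'a \<Rightarrow> 'm"
  assumes X: "X \<in> obj" and X': "X' \<in> obj" and A: "qcategory Q A"
    and adj: "is_adj Q (star Q X) A \<psi> \<rho>" and adj': "is_adj Q (star Q X') A \<psi>' \<rho>'"
begin

lemma cc_hom_terms_in: "(\<lambda>b. \<rho>' () b \<odot> \<psi> b ()) ` cob A \<subseteq> hom X X'"
  by (rule image_comp_in[where T = "cty A"])
    (use X X' A is_adj_star_in[OF X A adj] is_adj_star_radj_in[OF X' A adj'] in auto)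

lemma cc_hom_terms_in': "(\<lambda>b. \<rho> () b \<odot> \<psi>' b ()) ` cob A \<subseteq> hom X' X"
  by (rule image_comp_in[where T = "cty A"])
    (use X X' A is_adj_star_in[OF X' A adj'] is_adj_star_radj_in[OF X A adj] in auto)

lemma presheaf_comp_cc_hom_le:
  assumes a: "a \<in> cob A"
  shows "\<psi>' a () \<odot> jn X X' ((\<lambda>b. \<rho>' () b \<odot> \<psi> b ()) ` cob A) \<preceq> \<psi> a ()"
proof (rule comp_join_le[OF X X' cat_ty[OF A a] is_adj_star_in[OF X' A adj' a] cc_hom_terms_in
      is_adj_star_in[OF X A adj a]])
  fix t assume "t \<in> (\<lambda>b. \<rho>' () b \<odot> \<psi> b ()) ` cob A"
  then obtain b where b: "b \<in> cob A" and t: "t = \<rho>' () b \<odot> \<psi> b ()"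
    by auto
  have obj: "cty A a \<in> obj" "cty A b \<in> obj"
    using A a b by auto
  note in_b = is_adj_star_in[OF X A adj b] is_adj_star_radj_in[OF X' A adj' b]
  have "\<psi>' a () \<odot> t = (\<psi>' a () \<odot> \<rho>' () b) \<odot> \<psi> b ()"
    using t comp_assoc[OF X obj(2) X' obj(1) in_b is_adj_star_in[OF X' A adj' a]] by simp
  also have "hle X (cty A a) \<dots> (chom A a b \<odot> \<psi> b ())"
    using is_adj_star_counit[OF X' A adj' b a] in_b is_adj_star_in[OF X' A adj' a] obj X X' A a b
    by (intro hle_comp_left[OF hleI]) (auto intro: comp_in[OF obj(2) X' obj(1)])
  also have "hle X (cty A a) \<dots> (\<psi> a ())"
    using is_adj_star_act[OF X A adj b a] in_b is_adj_star_in[OF X A adj a] obj X A a b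
    by (intro hleI) (auto intro: comp_in[OF X obj(2,1)])
  finally show "\<psi>' a () \<odot> t \<preceq> \<psi> a ()"
    by (rule hleD)
qed

lemma cc_hom_comp_radj_le:
  assumes a: "a \<in> cob A"
  shows "jn X' X ((\<lambda>b. \<rho> () b \<odot> \<psi>' b ()) ` cob A) \<odot> \<rho>' () a \<preceq> \<rho> () a"
proof (rule join_comp_le[OF cat_ty[OF A a] X' X is_adj_star_radj_in[OF X' A adj' a] cc_hom_terms_in'
      is_adj_star_radj_in[OF X A adj a]])
  fix t assume "t \<in> (\<lambda>b. \<rho> () b \<odot> \<psi>' b ()) ` cob A"
  then obtain b where b: "b \<in> cob A" and t: "t = \<rho> () b \<odot> \<psi>' b ()"
    by auto
  have obj: "cty A a \<in> obj" "cty A b \<in> obj"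
    using A a b by auto
  note in_b = is_adj_star_in[OF X' A adj' b] is_adj_star_radj_in[OF X A adj b]
  have "t \<odot> \<rho>' () a = \<rho> () b \<odot> (\<psi>' b () \<odot> \<rho>' () a)"
    using t comp_assoc[OF obj(1) X' obj(2) X is_adj_star_radj_in[OF X' A adj' a] in_b] by simp
  also have "hle (cty A a) X \<dots> (\<rho> () b \<odot> chom A b a)"
    using is_adj_star_counit[OF X' A adj' a b] in_b is_adj_star_radj_in[OF X' A adj' a] obj X X' A a b
    by (intro hle_comp_right[OF hleI]) (auto intro: comp_in[OF obj(1) X' obj(2)])
  also have "hle (cty A a) X \<dots> (\<rho> () a)"
    using is_adj_star_radj_act[OF X A adj b a] in_b is_adj_star_radj_in[OF X A adj a] obj X A a b
    by (intro hleI) (auto intro: comp_in[OF obj(1,2) X])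
  finally show "t \<odot> \<rho>' () a \<preceq> \<rho> () a"
    by (rule hleD)
qed

lemma dsym_terms_in: "(\<lambda>a. (dsym Q (star Q X') A \<psi>' a ())\<^sup>o \<odot> dsym Q (star Q X) A \<psi> a ()) ` cob A \<subseteq> hom X X'"
  by (rule image_comp_in[where T = "cty A"])
    (use X X' A hleD(2)[OF hle_dsym_star(1)[OF X A adj]] hleD(2)[OF hle_dsym_star(1)[OF X' A adj']] in auto)

lemma join_dsym_le_symz_cc_hom:
  "hle X X' (jn X X' ((\<lambda>a. (dsym Q (star Q X') A \<psi>' a ())\<^sup>o \<odot> dsym Q (star Q X) A \<psi> a ()) ` cob A))
     (mt X X' (jn X X' ((\<lambda>a. \<rho>' () a \<odot> \<psi> a ()) ` cob A)) (jn X' X ((\<lambda>a. \<rho> () a \<odot> \<psi>' a ()) ` cob A))\<^sup>o)"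
proof (rule hle_meetI)
  let ?s = "dsym Q (star Q X) A \<psi>" and ?s' = "dsym Q (star Q X') A \<psi>'"
  show "hle X X' (jn X X' ((\<lambda>a. (?s' a ())\<^sup>o \<odot> ?s a ()) ` cob A)) (jn X X' ((\<lambda>a. \<rho>' () a \<odot> \<psi> a ()) ` cob A))"
  proof (rule hle_join_mono[OF X X' dsym_terms_in cc_hom_terms_in])
    fix t assume "t \<in> (\<lambda>a. (?s' a ())\<^sup>o \<odot> ?s a ()) ` cob A"
    then show "\<exists>u\<in>(\<lambda>a. \<rho>' () a \<odot> \<psi> a ()) ` cob A. t \<preceq> u"
      using hle_comp[OF hle_dsym_star(3)[OF X' A adj'] hle_dsym_star(1)[OF X A adj]] by (auto dest: hleD)
  qed
  show "hle X X' (jn X X' ((\<lambda>a. (?s' a ())\<^sup>o \<odot> ?s a ()) ` cob A))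
    (jn X' X ((\<lambda>a. \<rho> () a \<odot> \<psi>' a ()) ` cob A))\<^sup>o"
    unfolding conv_join[OF X' X cc_hom_terms_in']
  proof (rule hle_join_mono[OF X X' dsym_terms_in])
    fix t assume "t \<in> (\<lambda>a. (?s' a ())\<^sup>o \<odot> ?s a ()) ` cob A"
    then obtain a where a: "a \<in> cob A" and t: "t = (?s' a ())\<^sup>o \<odot> ?s a ()"
      by auto
    have "t \<preceq> (\<psi>' a ())\<^sup>o \<odot> (\<rho> () a)\<^sup>o"
      using t hleD(1)[OF hle_comp[OF hle_conv[OF hle_dsym_star(1)[OF X' A adj' a]]
        hle_dsym_star(2)[OF X A adj a]]]
      by simp
    also have "(\<psi>' a ())\<^sup>o \<odot> (\<rho> () a)\<^sup>o = (\<rho> () a \<odot> \<psi>' a ())\<^sup>o"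
      using conv_comp[OF X' cat_ty[OF A a] X is_adj_star_in[OF X' A adj' a]
        is_adj_star_radj_in[OF X A adj a]] a
      by simp
    finally show "\<exists>u\<in>conv ` (\<lambda>a. \<rho> () a \<odot> \<psi>' a ()) ` cob A. t \<preceq> u"
      using a by blast
  qed (use X X' cc_hom_terms_in' in auto)
qed

lemma dsym_comp_symz_cc_hom_le:
  assumes a: "a \<in> cob A"
  shows "hle X (cty A a) (dsym Q (star Q X') A \<psi>' a () \<odot>
      mt X X' (jn X X' ((\<lambda>b. \<rho>' () b \<odot> \<psi> b ()) ` cob A)) (jn X' X ((\<lambda>b. \<rho> () b \<odot> \<psi>' b ()) ` cob A))\<^sup>o)
    (dsym Q (star Q X) A \<psi> a ())"
    (is "hle X (cty A a) (?s' \<odot> mt X X' ?J1 ?J2\<^sup>o) _")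
  unfolding dsym_eq[OF qcategory_star[OF X] A adj _ a, simplified]
proof (rule hle_meetI)
  have obj: "cty A a \<in> obj"
    using A a by simp
  have "hle X (cty A a) (?s' \<odot> mt X X' ?J1 ?J2\<^sup>o) (\<psi>' a () \<odot> ?J1)"
    by (rule hle_comp[OF hle_dsym_star(1)[OF X' A adj' a]
      hle_meet1[OF X X' join_in[OF X X' cc_hom_terms_in]]])
  also have "hle X (cty A a) \<dots> (\<psi> a ())"
    using presheaf_comp_cc_hom_le[OF a] X X' obj cc_hom_terms_in is_adj_star_in[OF X' A adj' a]
      is_adj_star_in[OF X A adj a]
    by (intro hleI) (auto intro: comp_in[OF X X' obj])
  finally show "hle X (cty A a) (?s' \<odot> mt X X' ?J1 ?J2\<^sup>o) (\<psi> a ())" .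
  have "hle X (cty A a) (?s' \<odot> mt X X' ?J1 ?J2\<^sup>o) ((\<rho>' () a)\<^sup>o \<odot> ?J2\<^sup>o)"
    by (rule hle_comp[OF hle_dsym_star(2)[OF X' A adj' a]
      hle_meet2[OF X X' conv_in[OF X' X join_in[OF X' X cc_hom_terms_in']]]])
  also have "(\<rho>' () a)\<^sup>o \<odot> ?J2\<^sup>o = (?J2 \<odot> \<rho>' () a)\<^sup>o"
    using conv_comp[OF obj X' X is_adj_star_radj_in[OF X' A adj' a]
      join_in[OF X' X cc_hom_terms_in']] by simp
  also have "hle X (cty A a) \<dots> (\<rho> () a)\<^sup>o"
    using cc_hom_comp_radj_le[OF a] X X' obj cc_hom_terms_in' is_adj_star_radj_in[OF X' A adj' a]
      is_adj_star_radj_in[OF X A adj a]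
    by (intro hle_conv hleI) (auto intro: comp_in[OF obj X' X])
  finally show "hle X (cty A a) (?s' \<odot> mt X X' ?J1 ?J2\<^sup>o) (\<rho> () a)\<^sup>o" .
qed

lemma symz_cc_hom_eq:
  assumes S': "sym_ladj Q (star Q X') (symz Q A) (dsym Q (star Q X') A \<psi>')"
  shows "mt X X' (jn X X' ((\<lambda>a. \<rho>' () a \<odot> \<psi> a ()) ` cob A)) (jn X' X ((\<lambda>a. \<rho> () a \<odot> \<psi>' a ()) ` cob A))\<^sup>o
       = jn X X' ((\<lambda>a. (dsym Q (star Q X') A \<psi>' a ())\<^sup>o \<odot> dsym Q (star Q X) A \<psi> a ()) ` cob A)"
proof (rule hle_antisym[OF hleI join_dsym_le_symz_cc_hom])
  show "mt X X' (jn X X' ((\<lambda>a. \<rho>' () a \<odot> \<psi> a ()) ` cob A)) (jn X' X ((\<lambda>a. \<rho> () a \<odot> \<psi>' a ()) ` cob A))\<^sup>o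
      \<preceq> jn X X' ((\<lambda>a. (dsym Q (star Q X') A \<psi>' a ())\<^sup>o \<odot> dsym Q (star Q X) A \<psi> a ()) ` cob A)"
  proof (rule le_join_via_unit_left[where T = "cty A" and f = "\<lambda>a. dsym Q (star Q X') A \<psi>' a ()"])
    show "idm X' \<preceq> jn X' X' ((\<lambda>a. (dsym Q (star Q X') A \<psi>' a ())\<^sup>o \<odot> dsym Q (star Q X') A \<psi>' a ()) ` cob A)"
      using S' unfolding sym_ladj_dsym_star_iff[OF X' A adj'] .
  qed (use X X' A dsym_comp_symz_cc_hom_le hle_dsym_star(1)[OF X A adj] hle_dsym_star(1)[OF X' A adj']
      conv_in[OF X' cat_ty[OF A] hleD(2)[OF hle_dsym_star(1)[OF X' A adj']]] in \<open>auto dest: hleD\<close>)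
qed (use X X' dsym_terms_in in auto)

end

subsection \<open>\<open>L\<^sub>\<bbbA>\<close> and symmetrisation are mutually inverse\<close>

lemma cob_cc_iff: "(X, \<psi>) \<in> cob (cc Q A) \<longleftrightarrow> X \<in> obj \<and> ladj Q (star Q X) A \<psi>"
  by (simp add: cc_def)

lemma cob_sc_iff: "(X, \<phi>) \<in> cob (sc Q B) \<longleftrightarrow> X \<in> obj \<and> sym_ladj Q (star Q X) B \<phi>"
  by (auto simp: sc_def cob_cc_iff sym_ladj_def ladj_def)

lemma chom_cc: "chom (cc Q A) (X', \<psi>') (X, \<psi>) = jn X X' ((\<lambda>a. radj Q (star Q X') A \<psi>' () a \<odot> \<psi> a ()) ` cob A)"
  by (simp add: cc_def dcomp_def)

lemma Linv_eq: "Linv Q A (X, \<psi>) = (X, dsym Q (star Q X) A \<psi>)"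
  by (simp add: Linv_def)

lemma Lfun_sc:
  assumes A: "qcategory Q A" and p: "(X, \<phi>) \<in> cob (sc Q (symz Q A))"
  shows "Lfun Q A (X, \<phi>) \<in> cob (symz Q (cc Q A))" and "Linv Q A (Lfun Q A (X, \<phi>)) = (X, \<phi>)"
proof -
  have X: "X \<in> obj" and S: "sym_ladj Q (star Q X) (symz Q A) \<phi>"
    using p by (simp_all add: cob_sc_iff)
  show "Lfun Q A (X, \<phi>) \<in> cob (symz Q (cc Q A))"
    using X is_adj_lift[OF X A S] by (auto simp: Lfun_eq cob_cc_iff ladj_def)
  show "Linv Q A (Lfun Q A (X, \<phi>)) = (X, \<phi>)"
    using dsym_lift[OF X A S] by (simp add: Lfun_eq Linv_eq)
qed

lemma Linv_cc:
  assumes A: "qcategory Q A" and p: "(X, \<psi>) \<in> cob (cc Q A)"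
    and S: "sym_ladj Q (star Q X) (symz Q A) (dsym Q (star Q X) A \<psi>)"
  shows "Linv Q A (X, \<psi>) \<in> cob (sc Q (symz Q A))" and "Lfun Q A (Linv Q A (X, \<psi>)) = (X, \<psi>)"
proof -
  have X: "X \<in> obj" and L: "ladj Q (star Q X) A \<psi>"
    using p by (simp_all add: cob_cc_iff)
  show "Linv Q A (X, \<psi>) \<in> cob (sc Q (symz Q A))"
    using X S by (simp add: Linv_eq cob_sc_iff)
  show "Lfun Q A (Linv Q A (X, \<psi>)) = (X, \<psi>)"
    using lift_dsym[OF X A is_adj_radj[OF qcategory_star[OF X] A L] S] by (simp add: Linv_eq Lfun_eq)
qed

lemma Lfun_surj_iff:
  assumes A: "qcategory Q A"
  shows "(\<forall>\<psi>\<in>cob (symz Q (cc Q A)). \<exists>\<phi>\<in>cob (sc Q (symz Q A)). Lfun Q A \<phi> = \<psi>) \<longleftrightarrow>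
    (\<forall>X\<in>obj. \<forall>\<psi>. ladj Q (star Q X) A \<psi> \<longrightarrow>
      sym_ladj Q (star Q X) (symz Q A) (dsym Q (star Q X) A \<psi>))"
proof (intro iffI ballI allI impI)
  fix X \<psi> assume surj: "\<forall>\<psi>\<in>cob (symz Q (cc Q A)). \<exists>\<phi>\<in>cob (sc Q (symz Q A)). Lfun Q A \<phi> = \<psi>"
    and X: "X \<in> obj" and L: "ladj Q (star Q X) A \<psi>"
  obtain Y \<phi> where p: "(Y, \<phi>) \<in> cob (sc Q (symz Q A))" and "Lfun Q A (Y, \<phi>) = (X, \<psi>)"
    using surj X L by (fastforce simp: cob_cc_iff)
  then have "Linv Q A (X, \<psi>) = (Y, \<phi>)"
    using Lfun_sc(2)[OF A p] by simp
  then show "sym_ladj Q (star Q X) (symz Q A) (dsym Q (star Q X) A \<psi>)"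
    using p by (auto simp: Linv_eq cob_sc_iff)
next
  fix p assume presheaves: "\<forall>X\<in>obj. \<forall>\<psi>. ladj Q (star Q X) A \<psi> \<longrightarrow>
      sym_ladj Q (star Q X) (symz Q A) (dsym Q (star Q X) A \<psi>)"
    and "p \<in> cob (symz Q (cc Q A))"
  then obtain X \<psi> where p: "p = (X, \<psi>)" "(X, \<psi>) \<in> cob (cc Q A)"
    by (cases p) simp
  then show "\<exists>\<phi>\<in>cob (sc Q (symz Q A)). Lfun Q A \<phi> = p"
    using Linv_cc[OF A p(2)] presheaves by (auto simp: cob_cc_iff)
qed

lemma chom_symz_cc_Lfun:
  assumes A: "qcategory Q A"
    and p: "(X, \<phi>) \<in> cob (sc Q (symz Q A))" and p': "(X', \<phi>') \<in> cob (sc Q (symz Q A))"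
  shows "chom (symz Q (cc Q A)) (Lfun Q A (X', \<phi>')) (Lfun Q A (X, \<phi>))
    = chom (sc Q (symz Q A)) (X', \<phi>') (X, \<phi>)"
proof -
  have X: "X \<in> obj" and S: "sym_ladj Q (star Q X) (symz Q A) \<phi>"
    and X': "X' \<in> obj" and S': "sym_ladj Q (star Q X') (symz Q A) \<phi>'"
    using p p' by (simp_all add: cob_sc_iff)
  note adj = is_adj_lift[OF X A S] and adj' = is_adj_lift[OF X' A S']
  have radj_eqs: "radj Q (star Q X) A (lift A X \<phi>) = lift_radj A X \<phi>"
    "radj Q (star Q X') A (lift A X' \<phi>') = lift_radj A X' \<phi>'"
    "radj Q (star Q X') (symz Q A) \<phi>' = dual Q (star Q X') (symz Q A) \<phi>'"
    using radj_eqI[OF qcategory_star[OF X] A adj] radj_eqI[OF qcategory_star[OF X'] A adj']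
      radj_eqI[OF qcategory_star[OF X'] qcategory_symz[OF A] S'[unfolded sym_ladj_def]] by simp_all
  have "chom (symz Q (cc Q A)) (Lfun Q A (X', \<phi>')) (Lfun Q A (X, \<phi>)) =
      mt X X' (jn X X' ((\<lambda>a. lift_radj A X' \<phi>' () a \<odot> lift A X \<phi> a ()) ` cob A))
        (jn X' X ((\<lambda>a. lift_radj A X \<phi> () a \<odot> lift A X' \<phi>' a ()) ` cob A))\<^sup>o"
    using Lfun_sc(1)[OF A p] Lfun_sc(1)[OF A p']
    by (simp add: Lfun_eq chom_symz radj_eqs cc_def dcomp_def)
  also have "\<dots> = jn X X' ((\<lambda>a. (\<phi>' a ())\<^sup>o \<odot> \<phi> a ()) ` cob A)"
    using symz_cc_hom_eq[OF X X' A adj adj'] S' by (simp add: dsym_lift[OF X A S] dsym_lift[OF X' A S'])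
  also have "\<dots> = chom (sc Q (symz Q A)) (X', \<phi>') (X, \<phi>)"
    by (simp add: sc_def chom_cc radj_eqs dual_def)
  finally show ?thesis .
qed

lemma presheaves_iff_distributors:
  assumes A: "qcategory Q A"
  shows "(\<forall>X\<in>obj. \<forall>\<psi>. ladj Q (star Q X) A \<psi> \<longrightarrow>
      sym_ladj Q (star Q X) (symz Q A) (dsym Q (star Q X) A \<psi>)) \<longleftrightarrow>
    (\<forall>XX :: ('x, 'o, 'm) qcat. qcategory Q XX \<longrightarrow>
      (\<forall>\<Psi>. ladj Q XX A \<Psi> \<longrightarrow> sym_ladj Q (symz Q XX) (symz Q A) (dsym Q XX A \<Psi>)))"
  using sym_ladj_dsym_of_presheaves[OF A] sym_ladj_dsym_star_of_distributors[OF A] by blast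

lemma Lfun_iso:
  assumes A: "qcategory Q A"
    and presheaves: "\<forall>X\<in>obj. \<forall>\<psi>. ladj Q (star Q X) A \<psi> \<longrightarrow>
      sym_ladj Q (star Q X) (symz Q A) (dsym Q (star Q X) A \<psi>)"
  shows "(\<forall>\<phi>\<in>cob (sc Q (symz Q A)). Lfun Q A \<phi> \<in> cob (symz Q (cc Q A)) \<and> Linv Q A (Lfun Q A \<phi>) = \<phi>)
   \<and> (\<forall>\<psi>\<in>cob (symz Q (cc Q A)). Linv Q A \<psi> \<in> cob (sc Q (symz Q A)) \<and> Lfun Q A (Linv Q A \<psi>) = \<psi>)
   \<and> (\<forall>\<phi>\<in>cob (sc Q (symz Q A)). \<forall>\<phi>'\<in>cob (sc Q (symz Q A)).
        chom (symz Q (cc Q A)) (Lfun Q A \<phi>') (Lfun Q A \<phi>) = chom (sc Q (symz Q A)) \<phi>' \<phi>)"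
proof -
  have "Lfun Q A p \<in> cob (symz Q (cc Q A)) \<and> Linv Q A (Lfun Q A p) = p"
    if "p \<in> cob (sc Q (symz Q A))" for p
    using that Lfun_sc[OF A] by (cases p) auto
  moreover have "Linv Q A p \<in> cob (sc Q (symz Q A)) \<and> Lfun Q A (Linv Q A p) = p"
    if "p \<in> cob (symz Q (cc Q A))" for p
    using that Linv_cc[OF A] presheaves by (cases p) (auto simp: cob_cc_iff)
  moreover have "chom (symz Q (cc Q A)) (Lfun Q A p') (Lfun Q A p) = chom (sc Q (symz Q A)) p' p"
    if "p \<in> cob (sc Q (symz Q A))" "p' \<in> cob (sc Q (symz Q A))" for p p'
    using that chom_symz_cc_Lfun[OF A] by (cases p, cases p') auto
  ultimately show ?thesis
    by blast
qed

end

theorem proposition3p6: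
  fixes Q :: "('o, 'm) quantaloid" and A :: "('a, 'o, 'm) qcat"
  assumes "involutive_quantaloid Q" and "qcategory Q A"
  shows
   "((\<forall>\<psi>\<in>cob (symz Q (cc Q A)). \<exists>\<phi>\<in>cob (sc Q (symz Q A)). Lfun Q A \<phi> = \<psi>)
       \<longleftrightarrow>
     (\<forall>X\<in>qobj Q. \<forall>\<psi>. ladj Q (star Q X) A \<psi> \<longrightarrow>
        sym_ladj Q (star Q X) (symz Q A) (dsym Q (star Q X) A \<psi>)))
  \<and> ((\<forall>X\<in>qobj Q. \<forall>\<psi>. ladj Q (star Q X) A \<psi> \<longrightarrow>
        sym_ladj Q (star Q X) (symz Q A) (dsym Q (star Q X) A \<psi>))
       \<longleftrightarrow>
     (\<forall>XX :: ('x, 'o, 'm) qcat. qcategory Q XX \<longrightarrow>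
        (\<forall>\<Psi>. ladj Q XX A \<Psi> \<longrightarrow> sym_ladj Q (symz Q XX) (symz Q A) (dsym Q XX A \<Psi>))))
  \<and> ((\<forall>\<psi>\<in>cob (symz Q (cc Q A)). \<exists>\<phi>\<in>cob (sc Q (symz Q A)). Lfun Q A \<phi> = \<psi>)
       \<longrightarrow>
     (\<forall>\<phi>\<in>cob (sc Q (symz Q A)). Lfun Q A \<phi> \<in> cob (symz Q (cc Q A)) \<and> Linv Q A (Lfun Q A \<phi>) = \<phi>)
   \<and> (\<forall>\<psi>\<in>cob (symz Q (cc Q A)). Linv Q A \<psi> \<in> cob (sc Q (symz Q A)) \<and> Lfun Q A (Linv Q A \<psi>) = \<psi>)
   \<and> (\<forall>\<phi>\<in>cob (sc Q (symz Q A)). \<forall>\<phi>'\<in>cob (sc Q (symz Q A)).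
        chom (symz Q (cc Q A)) (Lfun Q A \<phi>') (Lfun Q A \<phi>) = chom (sc Q (symz Q A)) \<phi>' \<phi>))"
proof -
  interpret inv_quantaloid Q
    by (rule inv_quantaloid.intro) (rule assms(1))
  note A = assms(2)
  show ?thesis
    using Lfun_surj_iff[OF A] presheaves_iff_distributors[OF A, where 'x = 'x] Lfun_iso[OF A]
    by blast
qed

end
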